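(* Let $(V,m)$ be a discrete measure space and $(b,c)$ a graph over $(V,m)$. If $Q^{(N)}\neq Q^{(D)}$, then there exists a non-negative function $u\in D(Q^{(N)})\cap\ell^\infty(V)$, $u\not\equiv 0$, with $(\widetilde L+1)u=0$.
   Context: $V$ is a finite or countably infinite set and $m:V\to(0,\infty)$; $(V,m)$ is a discrete measure space. $C(V)$ is the set of all functions $V\to\mathbb C$, $C_c(V)$ the finitely supported ones, and $\ell^2(V,m)$ carries $\langle u,v\rangle=\sum_x u(x)\overline{v(x)}m(x)$. A graph over $(V,m)$ is a pair $(b,c)$ with $c:V\to[0,\infty)$, $b:V\times V\to[0,\infty)$, $b(x,x)=0$, $b(x,y)=b(y,x)$, $\sum_y b(x,y)<\infty$. Let $\widetilde F=\{u\in C(V):\sum_y|b(x,y)u(y)|<\infty\ \forall x\}$ and $\widetilde L u(x)=\frac{1}{m(x)}\sum_y b(x,y)(u(x)-u(y))+\frac{c(x)}{m(x)}u(x)$ for $u\in\widetilde F$. $Q^{(N)}$ is the form on $\ell^2(V,m)$ with domain $D(Q^{(N)})=\{u\in\ell^2(V,m):\frac12\sum_{x,y}b(x,y)|u(x)-u(y)|^2+\sum_x c(x)|u(x)|^2<\infty\}$ and $Q^{(N)}(u,v)=\frac12\sum_{x,y}b(x,y)(u(x)-u(y))\overline{(v(x)-v(y))}+\sum_x c(x)u(x)\overline{v(x)}$; it is non-negative, symmetric and closed, and $D(Q^{(N)})\subseteq\widetilde F$. $Q^{(D)}$ is the closure of the restriction of $Q^{(N)}$ to $C_c(V)$. Two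 forms are equal if they have the same domain and agree on it. *)

theory Defs
  imports "HOL-Analysis.Analysis"
begin

text \<open>Vertices: a type of class countable (finite or countably infinite set V).
  Functions on V are complex valued. A form on l2(V,m) is represented as a pair
  (domain, sesquilinear map).\<close>

type_synonym 'v form = "('v \<Rightarrow> complex) set \<times> (('v \<Rightarrow> complex) \<Rightarrow> ('v \<Rightarrow> complex) \<Rightarrow> complex)"

definition is_graph :: "('v \<Rightarrow> real) \<Rightarrow> ('v \<Rightarrow> 'v \<Rightarrow> real) \<Rightarrow> ('v \<Rightarrow> real) \<Rightarrow> bool" where
  "is_graph m b c \<longleftrightarrow> (\<forall>x. m x > 0) \<and> (\<forall>x. c x \<ge> 0) \<and> (\<forall>x y. b x y \<ge> 0)
     \<and> (\<forall>x. b x x = 0) \<and> (\<forall>x y. b x y = b y x) \<and> (\<forall>x. b x summable_on UNIV)"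

definition ell2 :: "('v \<Rightarrow> real) \<Rightarrow> ('v \<Rightarrow> complex) set" where
  "ell2 m = {u. (\<lambda>x. (cmod (u x))\<^sup>2 * m x) summable_on UNIV}"

definition ell2_norm :: "('v \<Rightarrow> real) \<Rightarrow> ('v \<Rightarrow> complex) \<Rightarrow> real" where
  "ell2_norm m u = sqrt (\<Sum>\<^sub>\<infinity>x. (cmod (u x))\<^sup>2 * m x)"

definition ell_infty :: "('v \<Rightarrow> complex) set" where
  "ell_infty = {u. \<exists>C. \<forall>x. cmod (u x) \<le> C}"

definition finsupp :: "('v \<Rightarrow> complex) set" where
  "finsupp = {u. finite {x. u x \<noteq> 0}}"

definition DQN :: "('v \<Rightarrow> real) \<Rightarrow> ('v \<Rightarrow> 'v \<Rightarrow> real) \<Rightarrow> ('v \<Rightarrow> real) \<Rightarrow> ('v \<Rightarrow> complex) set" where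
  "DQN m b c = {u. u \<in> ell2 m
      \<and> (\<lambda>(x,y). b x y * (cmod (u x - u y))\<^sup>2) summable_on UNIV
      \<and> (\<lambda>x. c x * (cmod (u x))\<^sup>2) summable_on UNIV}"

definition QNval :: "('v \<Rightarrow> 'v \<Rightarrow> real) \<Rightarrow> ('v \<Rightarrow> real) \<Rightarrow> ('v \<Rightarrow> complex) \<Rightarrow> ('v \<Rightarrow> complex) \<Rightarrow> complex" where
  "QNval b c u v =
     (1/2) * (\<Sum>\<^sub>\<infinity>(x,y). complex_of_real (b x y) * (u x - u y) * cnj (v x - v y))
     + (\<Sum>\<^sub>\<infinity>x. complex_of_real (c x) * u x * cnj (v x))"

definition QN :: "('v \<Rightarrow> real) \<Rightarrow> ('v \<Rightarrow> 'v \<Rightarrow> real) \<Rightarrow> ('v \<Rightarrow> real) \<Rightarrow> 'v form" where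
  "QN m b c = (DQN m b c, QNval b c)"

definition form_restrict :: "'v form \<Rightarrow> ('v \<Rightarrow> complex) set \<Rightarrow> 'v form" where
  "form_restrict q S = (fst q \<inter> S, snd q)"

definition approx_seq :: "('v \<Rightarrow> real) \<Rightarrow> 'v form \<Rightarrow> (nat \<Rightarrow> 'v \<Rightarrow> complex) \<Rightarrow> ('v \<Rightarrow> complex) \<Rightarrow> bool" where
  "approx_seq m q \<phi> u \<longleftrightarrow> (\<forall>n. \<phi> n \<in> fst q)
     \<and> (\<lambda>n. ell2_norm m (\<phi> n - u)) \<longlonglongrightarrow> 0
     \<and> (\<forall>e>0. \<exists>N. \<forall>n\<ge>N. \<forall>k\<ge>N. cmod (snd q (\<phi> n - \<phi> k) (\<phi> n - \<phi> k)) < e)"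

definition form_closure :: "('v \<Rightarrow> real) \<Rightarrow> 'v form \<Rightarrow> 'v form" where
  "form_closure m q =
     ({u \<in> ell2 m. \<exists>\<phi>. approx_seq m q \<phi> u},
      (\<lambda>u v. THE z. \<forall>\<phi> \<psi>. approx_seq m q \<phi> u \<longrightarrow> approx_seq m q \<psi> v
                 \<longrightarrow> (\<lambda>n. snd q (\<phi> n) (\<psi> n)) \<longlonglongrightarrow> z))"

definition QD :: "('v \<Rightarrow> real) \<Rightarrow> ('v \<Rightarrow> 'v \<Rightarrow> real) \<Rightarrow> ('v \<Rightarrow> real) \<Rightarrow> 'v form" where
  "QD m b c = form_closure m (form_restrict (QN m b c) finsupp)"

definition form_eq :: "'v form \<Rightarrow> 'v form \<Rightarrow> bool" where
  "form_eq q1 q2 \<longleftrightarrow> fst q1 = fst q2 \<and> (\<forall>u\<in>fst q1. \<forall>v\<in>fst q1. snd q1 u v = snd q2 u v)"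

definition Ftilde :: "('v \<Rightarrow> 'v \<Rightarrow> real) \<Rightarrow> ('v \<Rightarrow> complex) set" where
  "Ftilde b = {u. \<forall>x. (\<lambda>y. cmod (complex_of_real (b x y) * u y)) summable_on UNIV}"

definition Ltilde :: "('v \<Rightarrow> real) \<Rightarrow> ('v \<Rightarrow> 'v \<Rightarrow> real) \<Rightarrow> ('v \<Rightarrow> real) \<Rightarrow> ('v \<Rightarrow> complex) \<Rightarrow> 'v \<Rightarrow> complex" where
  "Ltilde m b c u x =
     (1 / complex_of_real (m x)) * (\<Sum>\<^sub>\<infinity>y. complex_of_real (b x y) * (u x - u y))
     + complex_of_real (c x / m x) * u x"

end

theory Submission
  imports Defs
begin

(*
  Write E(f) = Q(f) + ||f||^2 for the form norm.  The argument has three stages.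
  (1) Identification of Q^(D): along approximating sequences the values of Q^(N) converge
      (polarization plus continuity of the quadratic form), so D(Q^(D)) consists exactly of
      the functions that are E-limits of finitely supported functions ("approximable"), and
      Q^(D) agrees with Q^(N) there.  Hence Q^(N) <> Q^(D) yields a non-approximable w.
  (2) Reduction: approximable functions form an E-closed subspace and normal contractions act
      on D(Q^(N)); splitting w into four truncated parts plus a tail of vanishing form norm
      shows that w may be taken real, non-negative and bounded by some K.
  (3) Variational step: minimize E(w - phi) over finitely supported phi.  The defects
      w - phi_n of a minimizing sequence, truncated to [0, K], are again minimizing, are
      E-Cauchy by the parallelogram law and converge pointwise to some U in D(Q^(N)) (Fatou).
      U is not zero since w is not approximable, and perturbing the defects by multiples of a
      unit mass at x gives the Euler-Lagrange equation  m(x) ((L + 1) U)(x) = 0  at every x.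
*)

lemma infsum_fatou:
  fixes F :: "nat \<Rightarrow> 'a \<Rightarrow> real"
  assumes nonneg: "\<And>k x. F k x \<ge> 0" and lim: "\<And>x. (\<lambda>k. F k x) \<longlonglongrightarrow> f x"
    and bound: "\<And>k. k \<ge> N \<Longrightarrow> F k summable_on UNIV \<and> infsum (F k) UNIV \<le> B"
  shows "f summable_on UNIV \<and> infsum f UNIV \<le> B"
proof -
  have f_nonneg: "f x \<ge> 0" for x
    using lim[of x] nonneg by (meson LIMSEQ_le_const)
  have finite_sums: "sum f S \<le> B" if "finite S" for S
  proof -
    have "sum (F k) S \<le> B" if "k \<ge> N" for k
      using finite_sum_le_infsum[of "F k" UNIV S] bound[OF that] nonneg \<open>finite S\<close> by force
    moreover have "(\<lambda>k. sum (F k) S) \<longlonglongrightarrow> sum f S"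
      by (rule tendsto_sum) (use lim in auto)
    ultimately show ?thesis by (meson LIMSEQ_le_const2)
  qed
  have "f summable_on UNIV"
  proof (rule nonneg_bdd_above_summable_on)
    show "bdd_above (sum f ` {F. F \<subseteq> UNIV \<and> finite F})"
      by (rule bdd_aboveI[where M = B]) (use finite_sums in auto)
  qed (use f_nonneg in auto)
  moreover have "infsum f UNIV \<le> B"
    by (rule infsum_le_finite_sums[OF \<open>f summable_on UNIV\<close>]) (use finite_sums in auto)
  ultimately show ?thesis ..
qed

lemma infsum_dominated_convergence:
  fixes F :: "nat \<Rightarrow> 'a \<Rightarrow> real"
  assumes nonneg: "\<And>k x. 0 \<le> F k x" and dominated: "\<And>k x. F k x \<le> G x"
    and G: "G summable_on UNIV" and lim: "\<And>x. (\<lambda>k. F k x) \<longlonglongrightarrow> 0"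
  shows "(\<lambda>k. infsum (F k) UNIV) \<longlonglongrightarrow> 0"
proof (rule LIMSEQ_I)
  fix r :: real assume r: "r > 0"
  obtain S where S: "finite S" "dist (sum G S) (infsum G UNIV) \<le> r/2"
    using infsum_finite_approximation[OF G, of "r/2"] r by auto
  have F_summable: "F k summable_on A" for k A
    using summable_on_comparison_test[OF G, of "F k"] nonneg dominated summable_on_subset by blast
  have split: "infsum H UNIV = sum H S + infsum H (UNIV - S)" if "H summable_on UNIV" for H :: "'a \<Rightarrow> real"
    using infsum_Un_disjoint[of H S "UNIV - S"] that S(1) summable_on_subset[OF that]
    by (simp add: Un_Diff_cancel)
  have tail: "infsum G (UNIV - S) \<le> r/2"
    using split[OF G] S(2) by (simp add: dist_real_def)
  have "(\<lambda>k. sum (F k) S) \<longlonglongrightarrow> 0"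
    using tendsto_sum[of S "\<lambda>x k. F k x" "\<lambda>_. 0"] lim by simp
  then obtain N where N: "\<forall>k\<ge>N. norm (sum (F k) S) < r/2"
    using LIMSEQ_D[of _ 0 "r/2"] r by (metis diff_zero half_gt_zero)
  have "norm (infsum (F k) UNIV - 0) < r" if "k \<ge> N" for k
  proof -
    have "infsum (F k) (UNIV - S) \<le> infsum G (UNIV - S)"
      by (rule infsum_mono) (use F_summable summable_on_subset[OF G] dominated in auto)
    moreover have "infsum (F k) UNIV \<ge> 0" by (rule infsum_nonneg) (use nonneg in auto)
    ultimately show ?thesis using split[OF F_summable] N that tail by auto
  qed
  thus "\<exists>N. \<forall>k\<ge>N. norm (infsum (F k) UNIV - 0) < r" by blast
qed

lemma summable_on_finite_support:
  fixes f :: "'a \<Rightarrow> real"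
  assumes "finite S" "\<And>x. x \<notin> S \<Longrightarrow> f x = 0"
  shows "f summable_on UNIV"
  using summable_on_cong_neutral[of S UNIV f f] assms by auto

lemma has_sum_point_mass: "((\<lambda>y. if y = x then a else 0) has_sum (a :: real)) UNIV"
proof -
  have "((\<lambda>y. if y = x then a else 0) has_sum a) {x}"
    using has_sum_finite[of "{x}" "\<lambda>y. if y = x then a else 0"] by simp
  thus ?thesis by (rule has_sum_cong_neutral[THEN iffD1, rotated -1]) auto
qed

lemma has_sum_row:
  assumes "(h has_sum s) UNIV"
  shows "((\<lambda>(y,z). if y = x then h z else (0::real)) has_sum s) UNIV"
proof -
  have "((\<lambda>(y,z). if y = x then h z else 0) has_sum s) (range (Pair x))"
    using assms by (subst has_sum_reindex) (auto intro: inj_onI simp: o_def)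
  thus ?thesis
    by (rule has_sum_cong_neutral[THEN iffD1, rotated -1]) auto
qed

lemma has_sum_column:
  assumes "(h has_sum s) UNIV"
  shows "((\<lambda>(y,z). if z = x then h y else (0::real)) has_sum s) UNIV"
proof -
  have "bij_betw prod.swap (UNIV :: ('a \<times> 'a) set) UNIV"
    by (rule bij_betwI[where g = prod.swap]) auto
  moreover have "(\<lambda>p. (\<lambda>(y,z). if y = x then h z else 0) (prod.swap p))
      = (\<lambda>(y,z). if z = x then h y else (0::real))" by auto
  ultimately show ?thesis
    using has_sum_reindex_bij_betw[of prod.swap UNIV UNIV "\<lambda>(y,z). if y = x then h z else 0" s]
      has_sum_row[OF assms, of x] by simp
qed

lemma infsum_diff_real:
  fixes f g :: "'a \<Rightarrow> real"
  assumes "f summable_on A" "g summable_on A"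
  shows "infsum (\<lambda>y. f y - g y) A = infsum f A - infsum g A"
  using infsum_add[OF assms(1) summable_on_uminus[THEN iffD2, OF assms(2)]]
  by (simp add: infsum_uminus)

lemma summable_on_diff_real:
  fixes f g :: "'a \<Rightarrow> real"
  assumes "f summable_on A" "g summable_on A"
  shows "(\<lambda>y. f y - g y) summable_on A"
  using summable_on_add[OF assms(1) summable_on_uminus[THEN iffD2, OF assms(2)]] by simp

lemma infsum_of_real_complex:
  fixes f :: "'a \<Rightarrow> real"
  assumes "f summable_on A"
  shows "infsum (\<lambda>x. complex_of_real (f x)) A = complex_of_real (infsum f A)"
  by (rule infsumI[OF has_sum_of_real[OF has_sum_infsum[OF assms]]])

lemma summable_on_dominated:
  fixes h :: "'a \<Rightarrow> real"
  assumes "g summable_on UNIV" "\<And>z. \<bar>h z\<bar> \<le> C * g z"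
  shows "h summable_on UNIV"
proof -
  have "(\<lambda>z. norm (h z)) summable_on UNIV"
    by (rule summable_on_comparison_test[OF summable_on_cmult_right[OF assms(1)]]) (use assms in auto)
  thus ?thesis using summable_on_iff_abs_summable_on_real by blast
qed

lemma infsum_le_combination:
  fixes H P R :: "'a \<Rightarrow> real"
  assumes "P summable_on UNIV" "R summable_on UNIV" "A \<ge> 0" "B \<ge> 0"
    and "\<And>x. 0 \<le> H x" "\<And>x. H x \<le> A * P x + B * R x"
  shows "H summable_on UNIV \<and> infsum H UNIV \<le> A * infsum P UNIV + B * infsum R UNIV"
proof -
  have combination: "(\<lambda>x. A * P x + B * R x) summable_on UNIV"
    by (intro summable_on_add summable_on_cmult_right assms)
  have H: "H summable_on UNIV"
    by (rule summable_on_comparison_test[OF combination]) (use assms in auto)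
  have "infsum H UNIV \<le> infsum (\<lambda>x. A * P x + B * R x) UNIV"
    by (rule infsum_mono[OF H combination]) (use assms in auto)
  also have "\<dots> = A * infsum P UNIV + B * infsum R UNIV"
    by (simp add: infsum_add infsum_cmult_right summable_on_cmult_right assms)
  finally show ?thesis using H by blast
qed

lemma infsum_parallelogram_combination:
  fixes F1 F2 G1 G2 :: "'a \<Rightarrow> real"
  assumes "F1 summable_on UNIV" "F2 summable_on UNIV" "G1 summable_on UNIV" "G2 summable_on UNIV"
    and "\<And>p. F1 p + F2 p = 2 * G1 p + 2 * G2 p"
  shows "infsum F1 UNIV + infsum F2 UNIV = 2 * infsum G1 UNIV + 2 * infsum G2 UNIV"
proof -
  have "infsum F1 UNIV + infsum F2 UNIV = infsum (\<lambda>p. F1 p + F2 p) UNIV"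
    using infsum_add[OF assms(1,2)] by simp
  also have "\<dots> = infsum (\<lambda>p. 2 * G1 p + 2 * G2 p) UNIV" using assms(5) by simp
  also have "\<dots> = 2 * infsum G1 UNIV + 2 * infsum G2 UNIV"
    using assms by (simp add: infsum_add infsum_cmult_right summable_on_cmult_right)
  finally show ?thesis .
qed

lemma infsum_polarization_combination:
  fixes A B C D :: "'a \<Rightarrow> complex"
  assumes "A summable_on UNIV" "B summable_on UNIV" "C summable_on UNIV" "D summable_on UNIV"
  shows "infsum (\<lambda>p. (1/4) * (A p - B p + \<i> * C p - \<i> * D p)) UNIV
       = (1/4) * (infsum A UNIV - infsum B UNIV + \<i> * infsum C UNIV - \<i> * infsum D UNIV)"
proof -
  have "((\<lambda>p. - B p) has_sum - infsum B UNIV) UNIV"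
    using assms(2) by (intro has_sum_uminus[THEN iffD2]) simp
  moreover have "((\<lambda>p. - (\<i> * D p)) has_sum - (\<i> * infsum D UNIV)) UNIV"
    using has_sum_cmult_right[OF has_sum_infsum[OF assms(4)], of \<i>] by (simp add: has_sum_uminus)
  ultimately have "((\<lambda>p. A p + - B p + \<i> * C p + - (\<i> * D p)) has_sum
      (infsum A UNIV + - infsum B UNIV + \<i> * infsum C UNIV + - (\<i> * infsum D UNIV))) UNIV"
    using assms by (intro has_sum_add has_sum_cmult_right has_sum_infsum)
  hence "((\<lambda>p. (1/4) * (A p + - B p + \<i> * C p + - (\<i> * D p))) has_sum
      (1/4) * (infsum A UNIV + - infsum B UNIV + \<i> * infsum C UNIV + - (\<i> * infsum D UNIV))) UNIV"
    by (rule has_sum_cmult_right)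
  thus ?thesis by (simp add: infsumI)
qed

lemma infsum_tendsto_dominated:
  fixes G :: "nat \<Rightarrow> 'a \<Rightarrow> real"
  assumes H: "H summable_on UNIV" and dominated: "\<And>n y. \<bar>G n y\<bar> \<le> H y"
    and lim: "\<And>y. (\<lambda>n. G n y) \<longlonglongrightarrow> g y"
  shows "(\<lambda>n. infsum (G n) UNIV) \<longlonglongrightarrow> infsum g UNIV"
proof -
  have g_dominated: "\<bar>g y\<bar> \<le> H y" for y
    by (rule LIMSEQ_le_const2[OF tendsto_rabs[OF lim[of y]]]) (use dominated in auto)
  have summable: "G n summable_on UNIV" "g summable_on UNIV" for n
    by (rule summable_on_dominated[OF H, of _ 1]; simp add: dominated g_dominated)+
  have error: "(\<lambda>n. infsum (\<lambda>y. \<bar>G n y - g y\<bar>) UNIV) \<longlonglongrightarrow> 0"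
  proof (rule infsum_dominated_convergence[where G = "\<lambda>y. 2 * H y"])
    show "\<bar>G n y - g y\<bar> \<le> 2 * H y" for n y using dominated[of n y] g_dominated[of y] by linarith
    show "(\<lambda>y. 2 * H y) summable_on UNIV" by (rule summable_on_cmult_right[OF H])
    show "(\<lambda>n. \<bar>G n y - g y\<bar>) \<longlonglongrightarrow> 0" for y
      using tendsto_rabs[OF LIM_zero[OF lim[of y]]] by simp
  qed simp
  have bound: "norm (infsum (G n) UNIV - infsum g UNIV) \<le> infsum (\<lambda>y. \<bar>G n y - g y\<bar>) UNIV" for n
  proof -
    have "infsum (G n) UNIV - infsum g UNIV = infsum (\<lambda>y. G n y - g y) UNIV"
      using infsum_diff_real[OF summable] by simp
    also have "norm \<dots> \<le> infsum (\<lambda>y. \<bar>G n y - g y\<bar>) UNIV"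
    proof (rule norm_infsum_le[OF has_sum_infsum has_sum_infsum])
      show "(\<lambda>y. G n y - g y) summable_on UNIV" by (rule summable_on_diff_real[OF summable])
      show "(\<lambda>y. \<bar>G n y - g y\<bar>) summable_on UNIV"
        using summable_on_iff_abs_summable_on_real[THEN iffD1, OF summable_on_diff_real[OF summable]]
        by simp
    qed auto
    finally show ?thesis .
  qed
  have "(\<lambda>n. infsum (G n) UNIV - infsum g UNIV) \<longlonglongrightarrow> 0"
    by (rule tendsto_norm_zero_cancel, rule tendsto_sandwich[OF _ _ tendsto_const error]) (use bound in auto)
  thus ?thesis by (simp add: LIM_zero_iff)
qed

text \<open>Weighted triangle inequality for squares: the (1 + d, 1 + 1/d) form is what makes the
  quadratic form continuous without a Cauchy--Schwarz inequality.\<close>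
lemma cmod_add_sq_le:
  fixes a b :: complex
  assumes "d > 0"
  shows "(cmod (a + b))\<^sup>2 \<le> (1 + d) * (cmod a)\<^sup>2 + (1 + 1/d) * (cmod b)\<^sup>2"
proof -
  have "(cmod (a + b))\<^sup>2 \<le> (cmod a + cmod b)\<^sup>2"
    by (simp add: power_mono norm_triangle_ineq)
  also have "\<dots> \<le> (1 + d) * (cmod a)\<^sup>2 + (1 + 1/d) * (cmod b)\<^sup>2"
  proof -
    have "0 \<le> (d * cmod a - cmod b)\<^sup>2 / d" using assms by simp
    also have "\<dots> = d * (cmod a)\<^sup>2 - 2 * cmod a * cmod b + (cmod b)\<^sup>2 / d"
      using assms by (simp add: power2_eq_square field_simps)
    finally show ?thesis by (simp add: power2_eq_square algebra_simps add_divide_distrib)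
  qed
  finally show ?thesis .
qed

lemma cmod_add_sq_le_2: "(cmod (a + b))\<^sup>2 \<le> 2 * (cmod a)\<^sup>2 + 2 * (cmod (b::complex))\<^sup>2"
  using cmod_add_sq_le[of 1 a b] by simp

lemma cmod_diff_sq_le_2: "(cmod (a - b))\<^sup>2 \<le> 2 * (cmod a)\<^sup>2 + 2 * (cmod (b::complex))\<^sup>2"
  using cmod_add_sq_le_2[of a "- b"] by simp

lemma parallelogram_complex:
  "(cmod (a + b))\<^sup>2 + (cmod (a - b))\<^sup>2 = 2 * (cmod a)\<^sup>2 + 2 * (cmod (b::complex))\<^sup>2"
  by (simp only: cmod_power2) (simp add: power2_eq_square algebra_simps)

lemma polarization_complex:
  fixes a b :: complex
  shows "a * cnj b = (1/4) * (complex_of_real ((cmod (a + b))\<^sup>2) - complex_of_real ((cmod (a - b))\<^sup>2)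
     + \<i> * complex_of_real ((cmod (a + \<i> * b))\<^sup>2) - \<i> * complex_of_real ((cmod (a - \<i> * b))\<^sup>2))"
  by (simp only: cmod_power2) (simp add: complex_eq_iff power2_eq_square algebra_simps)

lemma eventually_fraction_small:
  assumes "(e::real) > 0"
  shows "\<exists>N::nat. \<forall>n\<ge>N. C / (real n + 1) < e"
proof -
  obtain N :: nat where N: "real N > C / e" using reals_Archimedean2 by blast
  have "C / (real n + 1) < e" if "n \<ge> N" for n
  proof -
    have "C < e * real N" using N assms by (simp add: divide_less_eq mult.commute)
    also have "\<dots> \<le> e * (real n + 1)" using that assms by (intro mult_left_mono) auto
    finally show ?thesis by (simp add: divide_less_eq mult.commute)
  qed
  thus ?thesis by blast
qed

lemma tendsto_one_over_Suc: "(\<lambda>n. 1 / (real n + 1)) \<longlonglongrightarrow> 0"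
  using LIMSEQ_inverse_real_of_nat by (simp add: inverse_eq_divide add.commute)

lemma tendsto_relaxed_triangle:
  fixes x e :: "nat \<Rightarrow> real"
  assumes e0: "e \<longlonglongrightarrow> 0" and e_nonneg: "\<And>n. e n \<ge> 0" and a_nonneg: "a \<ge> 0"
    and upper: "\<And>n d. d > 0 \<Longrightarrow> x n \<le> (1 + d) * a + (1 + 1/d) * e n"
    and lower: "\<And>n d. d > 0 \<Longrightarrow> a \<le> (1 + d) * x n + (1 + 1/d) * e n"
  shows "x \<longlonglongrightarrow> a"
proof -
  define d where "d n = sqrt (e n) + 1 / (real n + 1)" for n
  have d_pos: "d n > 0" for n
    unfolding d_def by (rule add_nonneg_pos[OF real_sqrt_ge_zero[OF e_nonneg]]) simp
  have error: "(1 + 1 / d n) * e n \<le> e n + sqrt (e n)" for n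
  proof -
    have "e n = sqrt (e n) * sqrt (e n)" using e_nonneg by simp
    also have "\<dots> \<le> sqrt (e n) * d n" unfolding d_def by (intro mult_left_mono) (auto simp: e_nonneg)
    finally have "e n / d n \<le> sqrt (e n)" using d_pos[of n] by (simp add: divide_le_eq)
    thus ?thesis by (simp add: algebra_simps)
  qed
  have sqrt_e0: "(\<lambda>n. sqrt (e n)) \<longlonglongrightarrow> 0" using tendsto_real_sqrt[OF e0] by simp
  have d0: "d \<longlonglongrightarrow> 0"
    unfolding d_def using tendsto_add[OF sqrt_e0 tendsto_one_over_Suc] by simp
  define U where "U n = d n * a + e n + sqrt (e n)" for n
  define L where "L n = d n * ((1 + d n) * a + e n + sqrt (e n)) + e n + sqrt (e n)" for n
  have U0: "U \<longlonglongrightarrow> 0" unfolding U_def using d0 e0 sqrt_e0 by (auto intro!: tendsto_eq_intros)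
  have L0: "(\<lambda>n. - L n) \<longlonglongrightarrow> 0"
    unfolding L_def using d0 e0 sqrt_e0 by (auto intro!: tendsto_eq_intros)
  have x_upper: "x n \<le> (1 + d n) * a + e n + sqrt (e n)" for n
    using upper[OF d_pos[of n], of n] error[of n] by linarith
  have below_U: "x n - a \<le> U n" for n
    using x_upper[of n] unfolding U_def by (simp add: algebra_simps)
  have above_L: "- L n \<le> x n - a" for n
  proof -
    have "a \<le> (1 + d n) * x n + e n + sqrt (e n)"
      using lower[OF d_pos[of n], of n] error[of n] by linarith
    moreover have "d n * x n \<le> d n * ((1 + d n) * a + e n + sqrt (e n))"
      by (rule mult_left_mono[OF x_upper]) (use d_pos[of n] in auto)
    ultimately show ?thesis unfolding L_def by (simp add: algebra_simps)
  qed
  have "(\<lambda>n. x n - a) \<longlonglongrightarrow> 0"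
    by (rule tendsto_sandwich[OF _ _ L0 U0]) (use above_L below_U in auto)
  thus ?thesis by (simp add: LIM_zero_iff)
qed

text \<open>Truncation to [0, K], and the remainder of a real or complex number after removing the
  truncations of its positive and negative real and imaginary parts.\<close>
definition cutoff :: "real \<Rightarrow> real \<Rightarrow> real" where
  "cutoff K s = max 0 (min K s)"

definition cutoff_tail :: "real \<Rightarrow> real \<Rightarrow> real" where
  "cutoff_tail K s = s - cutoff K s + cutoff K (- s)"

definition complex_cutoff_tail :: "real \<Rightarrow> complex \<Rightarrow> complex" where
  "complex_cutoff_tail K z = Complex (cutoff_tail K (Re z)) (cutoff_tail K (Im z))"

lemma cutoff_lipschitz: "K \<ge> 0 \<Longrightarrow> \<bar>cutoff K s - cutoff K t\<bar> \<le> \<bar>s - t\<bar>"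
  unfolding cutoff_def by (auto simp: max_def min_def abs_if)

lemma cutoff_abs_le: "K \<ge> 0 \<Longrightarrow> \<bar>cutoff K s\<bar> \<le> \<bar>s\<bar>"
  unfolding cutoff_def by (auto simp: max_def min_def abs_if)

lemma cutoff_range: "K \<ge> 0 \<Longrightarrow> 0 \<le> cutoff K s \<and> cutoff K s \<le> K"
  unfolding cutoff_def by (auto simp: max_def min_def)

lemma cutoff_id: "0 \<le> s \<Longrightarrow> s \<le> K \<Longrightarrow> cutoff K s = s"
  unfolding cutoff_def by auto

lemma cutoff_tail_lipschitz: "K \<ge> 0 \<Longrightarrow> \<bar>cutoff_tail K s - cutoff_tail K t\<bar> \<le> \<bar>s - t\<bar>"
  unfolding cutoff_tail_def cutoff_def by (auto simp: max_def min_def abs_if)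

lemma cutoff_tail_vanishes:
  assumes "\<bar>s\<bar> \<le> K"
  shows "cutoff_tail K s = 0"
proof -
  have "K \<ge> 0" using assms by linarith
  thus ?thesis using assms unfolding cutoff_tail_def cutoff_def by (auto simp: max_def min_def abs_if)
qed

lemma complex_cutoff_tail_lipschitz:
  assumes "K \<ge> 0"
  shows "cmod (complex_cutoff_tail K a - complex_cutoff_tail K a') \<le> cmod (a - a')"
proof -
  have "(cmod (complex_cutoff_tail K a - complex_cutoff_tail K a'))\<^sup>2
      = (cutoff_tail K (Re a) - cutoff_tail K (Re a'))\<^sup>2 + (cutoff_tail K (Im a) - cutoff_tail K (Im a'))\<^sup>2"
    by (simp add: cmod_power2 complex_cutoff_tail_def)
  also have "\<dots> \<le> (Re a - Re a')\<^sup>2 + (Im a - Im a')\<^sup>2"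
    using cutoff_tail_lipschitz[OF assms, of "Re a" "Re a'"] cutoff_tail_lipschitz[OF assms, of "Im a" "Im a'"]
    by (intro add_mono) (simp_all add: abs_le_square_iff)
  also have "\<dots> = (cmod (a - a'))\<^sup>2" by (simp add: cmod_power2)
  finally show ?thesis by (simp add: power2_le_iff_abs_le)
qed

lemma complex_cutoff_tail_zero: "complex_cutoff_tail K 0 = 0"
  by (simp add: complex_cutoff_tail_def cutoff_tail_def cutoff_def complex_eq_iff)

lemma complex_cutoff_tail_vanishes: "cmod z \<le> K \<Longrightarrow> complex_cutoff_tail K z = 0"
  using cutoff_tail_vanishes[of "Re z" K] cutoff_tail_vanishes[of "Im z" K]
    abs_Re_le_cmod[of z] abs_Im_le_cmod[of z]
  by (simp add: complex_cutoff_tail_def complex_eq_iff)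

lemma complex_cutoff_decomposition:
  "z = complex_of_real (cutoff K (Re z)) - complex_of_real (cutoff K (- Re z))
     + \<i> * complex_of_real (cutoff K (Im z)) - \<i> * complex_of_real (cutoff K (- Im z)) + complex_cutoff_tail K z"
  by (simp add: complex_cutoff_tail_def cutoff_tail_def complex_eq_iff)

lemma finsupp_add:
  assumes "\<phi> \<in> finsupp" "\<psi> \<in> finsupp"
  shows "(\<lambda>x. \<phi> x + \<psi> x) \<in> finsupp"
proof -
  have "{x. \<phi> x + \<psi> x \<noteq> 0} \<subseteq> {x. \<phi> x \<noteq> 0} \<union> {x. \<psi> x \<noteq> 0}" by auto
  thus ?thesis using assms unfolding finsupp_def by (auto intro: finite_subset)
qed

lemma finsupp_scale:
  assumes "\<phi> \<in> finsupp"
  shows "(\<lambda>x. s * \<phi> x) \<in> finsupp"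
proof -
  have "{x. s * \<phi> x \<noteq> 0} \<subseteq> {x. \<phi> x \<noteq> 0}" by auto
  thus ?thesis using assms unfolding finsupp_def by (auto intro: finite_subset)
qed

lemma finsupp_point_mass: "(\<lambda>y. if y = x then a else 0) \<in> finsupp"
proof -
  have "{y. (if y = x then a else 0) \<noteq> 0} \<subseteq> {x}" by auto
  thus ?thesis unfolding finsupp_def by (auto intro: finite_subset)
qed

locale weighted_graph =
  fixes m :: "'v \<Rightarrow> real" and b :: "'v \<Rightarrow> 'v \<Rightarrow> real" and c :: "'v \<Rightarrow> real"
  assumes graph: "is_graph m b c"
begin

lemma m_pos: "m x > 0" and c_nonneg: "c x \<ge> 0" and b_nonneg: "b x y \<ge> 0"
  and b_diag: "b x x = 0" and b_sym: "b x y = b y x" and b_summable: "b x summable_on UNIV"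
  using graph unfolding is_graph_def by auto

text \<open>The summands of the edge, killing and mass parts of the form norm, and the corresponding
  sums: energy f = Q(f), mass f = ||f||^2 and total_energy f = Q(f) + ||f||^2.\<close>
definition edge_density :: "('v \<Rightarrow> complex) \<Rightarrow> 'v \<times> 'v \<Rightarrow> real" where
  "edge_density f = (\<lambda>(x,y). b x y * (cmod (f x - f y))\<^sup>2)"

definition killing_density :: "('v \<Rightarrow> complex) \<Rightarrow> 'v \<Rightarrow> real" where
  "killing_density f = (\<lambda>x. c x * (cmod (f x))\<^sup>2)"

definition mass_density :: "('v \<Rightarrow> complex) \<Rightarrow> 'v \<Rightarrow> real" where
  "mass_density f = (\<lambda>x. (cmod (f x))\<^sup>2 * m x)"

definition energy :: "('v \<Rightarrow> complex) \<Rightarrow> real" where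
  "energy f = infsum (edge_density f) UNIV / 2 + infsum (killing_density f) UNIV"

definition mass :: "('v \<Rightarrow> complex) \<Rightarrow> real" where
  "mass f = infsum (mass_density f) UNIV"

definition total_energy :: "('v \<Rightarrow> complex) \<Rightarrow> real" where
  "total_energy f = energy f + mass f"

lemma DQN_iff:
  "f \<in> DQN m b c \<longleftrightarrow> mass_density f summable_on UNIV \<and> edge_density f summable_on UNIV
     \<and> killing_density f summable_on UNIV"
  unfolding DQN_def ell2_def edge_density_def killing_density_def mass_density_def by auto

lemma ell2_iff: "f \<in> ell2 m \<longleftrightarrow> mass_density f summable_on UNIV"
  unfolding ell2_def mass_density_def by auto

lemma DQN_ell2: "f \<in> DQN m b c \<Longrightarrow> f \<in> ell2 m"
  by (simp add: DQN_iff ell2_iff)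

lemma ell2_norm_eq: "ell2_norm m f = sqrt (mass f)"
  unfolding ell2_norm_def mass_def mass_density_def by simp

lemma edge_density_nonneg: "edge_density f p \<ge> 0"
  unfolding edge_density_def by (auto simp: b_nonneg split: prod.splits)

lemma killing_density_nonneg: "killing_density f x \<ge> 0"
  unfolding killing_density_def by (auto simp: c_nonneg)

lemma mass_density_nonneg: "mass_density f x \<ge> 0"
  unfolding mass_density_def using m_pos[of x] by auto

lemma edge_sum_nonneg: "infsum (edge_density f) A \<ge> 0"
  by (rule infsum_nonneg) (use edge_density_nonneg in auto)

lemma killing_sum_nonneg: "infsum (killing_density f) A \<ge> 0"
  by (rule infsum_nonneg) (use killing_density_nonneg in auto)

lemma mass_nonneg: "mass f \<ge> 0"
  unfolding mass_def by (rule infsum_nonneg) (use mass_density_nonneg in auto)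

lemma energy_nonneg: "energy f \<ge> 0"
  unfolding energy_def using edge_sum_nonneg[of f UNIV] killing_sum_nonneg[of f UNIV] by auto

lemma total_energy_nonneg: "total_energy f \<ge> 0"
  unfolding total_energy_def using energy_nonneg mass_nonneg by (simp add: add_nonneg_nonneg)

lemma mass_le_total_energy: "mass f \<le> total_energy f"
  and energy_le_total_energy: "energy f \<le> total_energy f"
  using energy_nonneg[of f] mass_nonneg[of f] unfolding total_energy_def by simp_all

lemma DQN_dominated:
  assumes f: "f \<in> DQN m b c" and g: "g \<in> DQN m b c" and AB: "A \<ge> 0" "B \<ge> 0"
    and increments: "\<And>x y. (cmod (h x - h y))\<^sup>2 \<le> A * (cmod (f x - f y))\<^sup>2 + B * (cmod (g x - g y))\<^sup>2"
    and point_values: "\<And>x. (cmod (h x))\<^sup>2 \<le> A * (cmod (f x))\<^sup>2 + B * (cmod (g x))\<^sup>2"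
  shows "h \<in> DQN m b c" "energy h \<le> A * energy f + B * energy g"
    "total_energy h \<le> A * total_energy f + B * total_energy g"
proof -
  have edge: "edge_density h summable_on UNIV \<and>
      infsum (edge_density h) UNIV \<le> A * infsum (edge_density f) UNIV + B * infsum (edge_density g) UNIV"
  proof (rule infsum_le_combination)
    fix p :: "'v \<times> 'v"
    obtain x y where p: "p = (x,y)" by (cases p)
    have "b x y * (cmod (h x - h y))\<^sup>2 \<le> b x y * (A * (cmod (f x - f y))\<^sup>2 + B * (cmod (g x - g y))\<^sup>2)"
      by (rule mult_left_mono[OF increments b_nonneg])
    thus "edge_density h p \<le> A * edge_density f p + B * edge_density g p"
      unfolding edge_density_def p by (simp add: algebra_simps)
  qed (use f g AB in \<open>auto simp: DQN_iff intro: edge_density_nonneg\<close>)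
  have killing: "killing_density h summable_on UNIV \<and>
      infsum (killing_density h) UNIV \<le> A * infsum (killing_density f) UNIV + B * infsum (killing_density g) UNIV"
  proof (rule infsum_le_combination)
    fix x
    have "c x * (cmod (h x))\<^sup>2 \<le> c x * (A * (cmod (f x))\<^sup>2 + B * (cmod (g x))\<^sup>2)"
      by (rule mult_left_mono[OF point_values c_nonneg])
    thus "killing_density h x \<le> A * killing_density f x + B * killing_density g x"
      unfolding killing_density_def by (simp add: algebra_simps)
  qed (use f g AB in \<open>auto simp: DQN_iff intro: killing_density_nonneg\<close>)
  have mass: "mass_density h summable_on UNIV \<and>
      infsum (mass_density h) UNIV \<le> A * infsum (mass_density f) UNIV + B * infsum (mass_density g) UNIV"
  proof (rule infsum_le_combination)
    fix x
    have "(cmod (h x))\<^sup>2 * m x \<le> (A * (cmod (f x))\<^sup>2 + B * (cmod (g x))\<^sup>2) * m x"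
      by (rule mult_right_mono[OF point_values]) (use m_pos[of x] in auto)
    thus "mass_density h x \<le> A * mass_density f x + B * mass_density g x"
      unfolding mass_density_def by (simp add: algebra_simps)
  qed (use f g AB in \<open>auto simp: DQN_iff intro: mass_density_nonneg\<close>)
  show "h \<in> DQN m b c" using edge killing mass DQN_iff by blast
  show "energy h \<le> A * energy f + B * energy g"
    using edge killing unfolding energy_def by (simp add: algebra_simps)
  show "total_energy h \<le> A * total_energy f + B * total_energy g"
    using edge killing mass unfolding total_energy_def energy_def mass_def by (simp add: algebra_simps)
qed

lemma DQN_contraction:
  assumes f: "f \<in> DQN m b c"
    and "\<And>x y. cmod (h x - h y) \<le> cmod (f x - f y)" and "\<And>x. cmod (h x) \<le> cmod (f x)"
  shows "h \<in> DQN m b c" "total_energy h \<le> total_energy f"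
  using DQN_dominated[OF f f, of 1 0 h] assms by (auto intro: power_mono)

lemma DQN_add:
  assumes f: "f \<in> DQN m b c" and g: "g \<in> DQN m b c"
  shows "(\<lambda>x. f x + g x) \<in> DQN m b c" "energy (\<lambda>x. f x + g x) \<le> 2 * energy f + 2 * energy g"
    "total_energy (\<lambda>x. f x + g x) \<le> 2 * total_energy f + 2 * total_energy g"
proof -
  have "(cmod ((f x + g x) - (f y + g y)))\<^sup>2 \<le> 2 * (cmod (f x - f y))\<^sup>2 + 2 * (cmod (g x - g y))\<^sup>2" for x y
    using cmod_add_sq_le_2[of "f x - f y" "g x - g y"] by (simp add: algebra_simps)
  thus "(\<lambda>x. f x + g x) \<in> DQN m b c" "energy (\<lambda>x. f x + g x) \<le> 2 * energy f + 2 * energy g"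
    "total_energy (\<lambda>x. f x + g x) \<le> 2 * total_energy f + 2 * total_energy g"
    using DQN_dominated[OF f g, of 2 2 "\<lambda>x. f x + g x"] cmod_add_sq_le_2 by auto
qed

lemma DQN_diff:
  assumes f: "f \<in> DQN m b c" and g: "g \<in> DQN m b c"
  shows "(\<lambda>x. f x - g x) \<in> DQN m b c"
proof -
  have "(cmod ((f x - g x) - (f y - g y)))\<^sup>2 \<le> 2 * (cmod (f x - f y))\<^sup>2 + 2 * (cmod (g x - g y))\<^sup>2" for x y
    using cmod_diff_sq_le_2[of "f x - f y" "g x - g y"] by (simp add: algebra_simps)
  thus ?thesis using DQN_dominated(1)[OF f g, of 2 2] cmod_diff_sq_le_2 by auto
qed

lemma DQN_scale:
  assumes f: "f \<in> DQN m b c"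
  shows "(\<lambda>x. s * f x) \<in> DQN m b c" "energy (\<lambda>x. s * f x) = (cmod s)\<^sup>2 * energy f"
    "total_energy (\<lambda>x. s * f x) = (cmod s)\<^sup>2 * total_energy f"
proof -
  have edge: "edge_density (\<lambda>x. s * f x) = (\<lambda>p. (cmod s)\<^sup>2 * edge_density f p)"
    by (auto simp: edge_density_def fun_eq_iff right_diff_distrib[symmetric] norm_mult power_mult_distrib)
  have killing: "killing_density (\<lambda>x. s * f x) = (\<lambda>x. (cmod s)\<^sup>2 * killing_density f x)"
    by (auto simp: killing_density_def fun_eq_iff norm_mult power_mult_distrib)
  have mass: "mass_density (\<lambda>x. s * f x) = (\<lambda>x. (cmod s)\<^sup>2 * mass_density f x)"
    by (auto simp: mass_density_def fun_eq_iff norm_mult power_mult_distrib)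
  show "(\<lambda>x. s * f x) \<in> DQN m b c"
    using f unfolding DQN_iff edge killing mass by (auto intro: summable_on_cmult_right)
  show energy: "energy (\<lambda>x. s * f x) = (cmod s)\<^sup>2 * energy f"
    unfolding energy_def edge killing infsum_cmult_right' by (simp add: algebra_simps)
  show "total_energy (\<lambda>x. s * f x) = (cmod s)\<^sup>2 * total_energy f"
    unfolding total_energy_def mass_def energy mass infsum_cmult_right' by (simp add: algebra_simps)
qed

lemma energy_swap: "energy (\<lambda>x. g x - f x) = energy (\<lambda>x. f x - g x)"
  and total_energy_swap: "total_energy (\<lambda>x. g x - f x) = total_energy (\<lambda>x. f x - g x)"
proof -
  have "(\<lambda>x. g x - f x) = (\<lambda>x. (-1) * (f x - g x))" by (simp add: algebra_simps)
  hence "edge_density (\<lambda>x. g x - f x) = edge_density (\<lambda>x. f x - g x)"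
    "killing_density (\<lambda>x. g x - f x) = killing_density (\<lambda>x. f x - g x)"
    "mass_density (\<lambda>x. g x - f x) = mass_density (\<lambda>x. f x - g x)"
    by (auto simp: edge_density_def killing_density_def mass_density_def norm_minus_commute
        fun_eq_iff algebra_simps)
  thus "energy (\<lambda>x. g x - f x) = energy (\<lambda>x. f x - g x)"
    "total_energy (\<lambda>x. g x - f x) = total_energy (\<lambda>x. f x - g x)"
    by (simp_all add: total_energy_def energy_def mass_def)
qed


lemma energy_add_le:
  assumes f: "f \<in> DQN m b c" and g: "g \<in> DQN m b c" and d: "d > 0"
  shows "energy (\<lambda>x. f x + g x) \<le> (1 + d) * energy f + (1 + 1/d) * energy g"
proof -
  have "(cmod ((f x + g x) - (f y + g y)))\<^sup>2 \<le> (1 + d) * (cmod (f x - f y))\<^sup>2 + (1 + 1/d) * (cmod (g x - g y))\<^sup>2"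
    for x y using cmod_add_sq_le[OF d, of "f x - f y" "g x - g y"] by (simp add: algebra_simps)
  thus ?thesis using DQN_dominated(2)[OF f g, of "1 + d" "1 + 1/d"] cmod_add_sq_le[OF d] d by auto
qed

lemma total_energy_parallelogram:
  assumes f: "f \<in> DQN m b c" and g: "g \<in> DQN m b c"
  shows "total_energy (\<lambda>x. f x + g x) + total_energy (\<lambda>x. f x - g x)
       = 2 * total_energy f + 2 * total_energy g"
proof -
  have sums: "(\<lambda>x. f x + g x) \<in> DQN m b c" "(\<lambda>x. f x - g x) \<in> DQN m b c"
    using DQN_add(1) DQN_diff f g by auto
  have edge: "edge_density (\<lambda>x. f x + g x) p + edge_density (\<lambda>x. f x - g x) p
      = 2 * edge_density f p + 2 * edge_density g p" for p
  proof -
    obtain x y where p: "p = (x,y)" by (cases p)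
    have "(f x + g x) - (f y + g y) = (f x - f y) + (g x - g y)"
      "(f x - g x) - (f y - g y) = (f x - f y) - (g x - g y)" by simp_all
    thus ?thesis unfolding p edge_density_def prod.case
      using arg_cong[OF parallelogram_complex[of "f x - f y" "g x - g y"], of "\<lambda>t. b x y * t"]
      by (simp add: algebra_simps)
  qed
  have killing: "killing_density (\<lambda>x. f x + g x) p + killing_density (\<lambda>x. f x - g x) p
      = 2 * killing_density f p + 2 * killing_density g p" for p
    using arg_cong[OF parallelogram_complex[of "f p" "g p"], of "\<lambda>t. c p * t"]
    by (simp add: killing_density_def algebra_simps)
  have mass: "mass_density (\<lambda>x. f x + g x) p + mass_density (\<lambda>x. f x - g x) p
      = 2 * mass_density f p + 2 * mass_density g p" for p
    using arg_cong[OF parallelogram_complex[of "f p" "g p"], of "\<lambda>t. t * m p"]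
    by (simp add: mass_density_def algebra_simps)
  have "infsum (edge_density (\<lambda>x. f x + g x)) UNIV + infsum (edge_density (\<lambda>x. f x - g x)) UNIV
      = 2 * infsum (edge_density f) UNIV + 2 * infsum (edge_density g) UNIV"
    "infsum (killing_density (\<lambda>x. f x + g x)) UNIV + infsum (killing_density (\<lambda>x. f x - g x)) UNIV
      = 2 * infsum (killing_density f) UNIV + 2 * infsum (killing_density g) UNIV"
    "infsum (mass_density (\<lambda>x. f x + g x)) UNIV + infsum (mass_density (\<lambda>x. f x - g x)) UNIV
      = 2 * infsum (mass_density f) UNIV + 2 * infsum (mass_density g) UNIV"
    by (rule infsum_parallelogram_combination; use sums f g edge killing mass in \<open>simp add: DQN_iff\<close>)+
  thus ?thesis unfolding total_energy_def energy_def mass_def by (simp add: algebra_simps)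
qed

text \<open>Finitely supported functions have finite energy: each row sum of the edge density is
  bounded by the weighted degree, and only finitely many rows are non-zero.\<close>
lemma finsupp_DQN:
  assumes "\<phi> \<in> finsupp"
  shows "\<phi> \<in> DQN m b c"
proof -
  define S where "S = {x. \<phi> x \<noteq> 0}"
  have S: "finite S" and outside: "x \<notin> S \<Longrightarrow> \<phi> x = 0" for x
    using assms unfolding finsupp_def S_def by auto
  define row where "row p = b (fst p) (snd p) * (cmod (\<phi> (fst p)))\<^sup>2" for p
  have "row summable_on Sigma UNIV (\<lambda>_. UNIV)"
  proof (rule summable_on_SigmaI)
    show "((\<lambda>y. row (x, y)) has_sum infsum (b x) UNIV * (cmod (\<phi> x))\<^sup>2) UNIV" for x
      unfolding row_def by (simp add: has_sum_cmult_left b_summable)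
    show "(\<lambda>x. infsum (b x) UNIV * (cmod (\<phi> x))\<^sup>2) summable_on UNIV"
      by (rule summable_on_finite_support[OF S]) (simp add: outside)
  qed (simp add: row_def b_nonneg)
  hence row: "row summable_on UNIV" by simp
  have "bij_betw prod.swap (UNIV :: ('v \<times> 'v) set) UNIV"
    by (rule bij_betwI[where g = prod.swap]) auto
  hence column: "(\<lambda>p. row (prod.swap p)) summable_on UNIV"
    using summable_on_reindex_bij_betw[of prod.swap UNIV UNIV row] row by simp
  have "edge_density \<phi> summable_on UNIV"
  proof (rule summable_on_comparison_test)
    show "(\<lambda>p. 2 * row p + 2 * row (prod.swap p)) summable_on UNIV"
      by (intro summable_on_add summable_on_cmult_right row column)
    fix p :: "'v \<times> 'v" assume "p \<in> UNIV"
    obtain x y where p: "p = (x,y)" by (cases p)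
    have "b x y * (cmod (\<phi> x - \<phi> y))\<^sup>2 \<le> b x y * (2 * (cmod (\<phi> x))\<^sup>2 + 2 * (cmod (\<phi> y))\<^sup>2)"
      by (rule mult_left_mono[OF cmod_diff_sq_le_2 b_nonneg])
    thus "edge_density \<phi> p \<le> 2 * row p + 2 * row (prod.swap p)"
      using b_sym[of y x] by (simp add: p edge_density_def row_def algebra_simps)
  qed (rule edge_density_nonneg)
  moreover have "killing_density \<phi> summable_on UNIV" "mass_density \<phi> summable_on UNIV"
    by (auto intro!: summable_on_finite_support[OF S]
        simp: outside killing_density_def mass_density_def)
  ultimately show ?thesis by (simp add: DQN_iff)
qed

lemma QNval_diagonal:
  assumes "f \<in> DQN m b c"
  shows "QNval b c f f = complex_of_real (energy f)"
proof -
  have "(\<lambda>(x,y). complex_of_real (b x y) * (f x - f y) * cnj (f x - f y))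
      = (\<lambda>p. complex_of_real (edge_density f p))"
    by (rule ext, clarify) (simp only: edge_density_def prod.case mult.assoc complex_norm_square of_real_mult)
  moreover have "(\<lambda>x. complex_of_real (c x) * f x * cnj (f x)) = (\<lambda>x. complex_of_real (killing_density f x))"
    by (rule ext) (simp only: killing_density_def mult.assoc complex_norm_square of_real_mult)
  ultimately show ?thesis using assms unfolding QNval_def energy_def
    by (simp add: DQN_iff infsum_of_real_complex)
qed

lemma edge_polarization:
  "(\<lambda>(x,y). complex_of_real (b x y) * (f x - f y) * cnj (g x - g y)) =
   (\<lambda>p. (1/4) * (complex_of_real (edge_density (\<lambda>x. f x + g x) p)
     - complex_of_real (edge_density (\<lambda>x. f x - g x) p)
     + \<i> * complex_of_real (edge_density (\<lambda>x. f x + \<i> * g x) p)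
     - \<i> * complex_of_real (edge_density (\<lambda>x. f x - \<i> * g x) p)))"
proof (rule ext, clarify)
  fix x y
  have "f x + g x - (f y + g y) = (f x - f y) + (g x - g y)"
    "f x - g x - (f y - g y) = (f x - f y) - (g x - g y)"
    "f x + \<i> * g x - (f y + \<i> * g y) = (f x - f y) + \<i> * (g x - g y)"
    "f x - \<i> * g x - (f y - \<i> * g y) = (f x - f y) - \<i> * (g x - g y)"
    by (simp_all add: algebra_simps)
  thus "complex_of_real (b x y) * (f x - f y) * cnj (g x - g y) =
     (1/4) * (complex_of_real (edge_density (\<lambda>x. f x + g x) (x,y))
     - complex_of_real (edge_density (\<lambda>x. f x - g x) (x,y))
     + \<i> * complex_of_real (edge_density (\<lambda>x. f x + \<i> * g x) (x,y))
     - \<i> * complex_of_real (edge_density (\<lambda>x. f x - \<i> * g x) (x,y)))"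
    unfolding edge_density_def prod.case mult.assoc polarization_complex[of "f x - f y" "g x - g y"]
    by (simp add: algebra_simps)
qed

lemma killing_polarization:
  "(\<lambda>x. complex_of_real (c x) * f x * cnj (g x)) =
   (\<lambda>x. (1/4) * (complex_of_real (killing_density (\<lambda>x. f x + g x) x)
     - complex_of_real (killing_density (\<lambda>x. f x - g x) x)
     + \<i> * complex_of_real (killing_density (\<lambda>x. f x + \<i> * g x) x)
     - \<i> * complex_of_real (killing_density (\<lambda>x. f x - \<i> * g x) x)))"
proof (rule ext)
  fix x
  show "complex_of_real (c x) * f x * cnj (g x) =
    (1/4) * (complex_of_real (killing_density (\<lambda>x. f x + g x) x)
     - complex_of_real (killing_density (\<lambda>x. f x - g x) x)
     + \<i> * complex_of_real (killing_density (\<lambda>x. f x + \<i> * g x) x)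
     - \<i> * complex_of_real (killing_density (\<lambda>x. f x - \<i> * g x) x))"
    unfolding killing_density_def mult.assoc polarization_complex[of "f x" "g x"]
    by (simp add: algebra_simps)
qed

lemma QNval_polarization:
  assumes f: "f \<in> DQN m b c" and g: "g \<in> DQN m b c"
  shows "QNval b c f g = (1/4) * (complex_of_real (energy (\<lambda>x. f x + g x))
     - complex_of_real (energy (\<lambda>x. f x - g x)) + \<i> * complex_of_real (energy (\<lambda>x. f x + \<i> * g x))
     - \<i> * complex_of_real (energy (\<lambda>x. f x - \<i> * g x)))"
proof -
  have ig: "(\<lambda>x. \<i> * g x) \<in> DQN m b c" by (rule DQN_scale(1)[OF g])
  have D: "(\<lambda>x. f x + g x) \<in> DQN m b c" "(\<lambda>x. f x - g x) \<in> DQN m b c"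
    "(\<lambda>x. f x + \<i> * g x) \<in> DQN m b c" "(\<lambda>x. f x - \<i> * g x) \<in> DQN m b c"
    using DQN_add(1)[OF f g] DQN_diff[OF f g] DQN_add(1)[OF f ig] DQN_diff[OF f ig] by simp_all
  have summable: "(\<lambda>p. complex_of_real (edge_density h p)) summable_on UNIV"
    "(\<lambda>x. complex_of_real (killing_density h x)) summable_on UNIV" if "h \<in> DQN m b c" for h
    using that by (auto intro: summable_on_of_real simp: DQN_iff)
  have sums: "infsum (\<lambda>p. complex_of_real (edge_density h p)) UNIV = complex_of_real (infsum (edge_density h) UNIV)"
    "infsum (\<lambda>x. complex_of_real (killing_density h x)) UNIV = complex_of_real (infsum (killing_density h) UNIV)"
    if "h \<in> DQN m b c" for h
    using that by (auto intro: infsum_of_real_complex simp: DQN_iff)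
  show ?thesis
    unfolding QNval_def edge_polarization killing_polarization
      infsum_polarization_combination[OF summable(1)[OF D(1)] summable(1)[OF D(2)] summable(1)[OF D(3)] summable(1)[OF D(4)]]
      infsum_polarization_combination[OF summable(2)[OF D(1)] summable(2)[OF D(2)] summable(2)[OF D(3)] summable(2)[OF D(4)]]
      sums[OF D(1)] sums[OF D(2)] sums[OF D(3)] sums[OF D(4)] energy_def
    by (simp add: algebra_simps)
qed

lemma energy_continuous:
  assumes h: "\<And>n. h n \<in> DQN m b c" and h0: "h0 \<in> DQN m b c"
    and lim: "(\<lambda>n. energy (\<lambda>x. h n x - h0 x)) \<longlonglongrightarrow> 0"
  shows "(\<lambda>n. energy (h n)) \<longlonglongrightarrow> energy h0"
proof (rule tendsto_relaxed_triangle[OF lim energy_nonneg energy_nonneg])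
  fix n and d :: real assume d: "d > 0"
  have "(\<lambda>x. h n x - h0 x) \<in> DQN m b c" "(\<lambda>x. h0 x - h n x) \<in> DQN m b c"
    using DQN_diff h h0 by auto
  thus "energy (h n) \<le> (1 + d) * energy h0 + (1 + 1 / d) * energy (\<lambda>x. h n x - h0 x)"
    "energy h0 \<le> (1 + d) * energy (h n) + (1 + 1 / d) * energy (\<lambda>x. h n x - h0 x)"
    using energy_add_le[OF h0 _ d, of "\<lambda>x. h n x - h0 x"] energy_add_le[OF h[of n] _ d, of "\<lambda>x. h0 x - h n x"]
      energy_swap[of h0 "h n"] by simp_all
qed

lemma mass_density_le_mass:
  assumes "f \<in> ell2 m"
  shows "(cmod (f x))\<^sup>2 * m x \<le> mass f"
  using finite_sum_le_infsum[of "mass_density f" UNIV "{x}"] assms mass_density_nonneg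
  by (simp add: ell2_iff mass_def mass_density_def)

lemma pointwise_from_mass:
  assumes "\<And>n. h n \<in> ell2 m" "(\<lambda>n. mass (h n)) \<longlonglongrightarrow> 0"
  shows "(\<lambda>n. h n x) \<longlonglongrightarrow> 0"
proof -
  have "(\<lambda>n. (cmod (h n x))\<^sup>2) \<longlonglongrightarrow> 0"
  proof (rule tendsto_sandwich[of "\<lambda>_. 0" _ _ "\<lambda>n. mass (h n) / m x"])
    show "\<forall>\<^sub>F n in sequentially. (cmod (h n x))\<^sup>2 \<le> mass (h n) / m x"
      using mass_density_le_mass[OF assms(1)] m_pos[of x] by (auto simp: pos_le_divide_eq)
    show "(\<lambda>n. mass (h n) / m x) \<longlonglongrightarrow> 0" using tendsto_divide_zero[OF assms(2)] by simp
  qed auto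
  hence "(\<lambda>n. sqrt ((cmod (h n x))\<^sup>2)) \<longlonglongrightarrow> sqrt 0" by (rule tendsto_real_sqrt)
  thus ?thesis by (simp add: tendsto_norm_zero_iff)
qed


lemma ell2_diff:
  assumes "u \<in> ell2 m" "v \<in> ell2 m"
  shows "(\<lambda>x. u x - v x) \<in> ell2 m"
proof -
  have "mass_density (\<lambda>x. u x - v x) x \<le> 2 * mass_density u x + 2 * mass_density v x" for x
    using mult_right_mono[OF cmod_diff_sq_le_2[of "u x" "v x"], of "m x"] m_pos[of x]
    by (simp add: mass_density_def algebra_simps)
  thus ?thesis
    using infsum_le_combination[of "mass_density u" "mass_density v" 2 2 "mass_density (\<lambda>x. u x - v x)"]
      assms mass_density_nonneg by (simp add: ell2_iff)
qed

lemma energy_fatou: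
  assumes lim: "\<And>x. (\<lambda>k. h k x) \<longlonglongrightarrow> f x" and D: "\<And>k. k \<ge> N \<Longrightarrow> h k \<in> DQN m b c"
    and bound: "\<And>k. k \<ge> N \<Longrightarrow> energy (h k) \<le> B"
  shows "edge_density f summable_on UNIV" "killing_density f summable_on UNIV" "energy f \<le> 2 * B"
proof -
  have edge: "edge_density f summable_on UNIV \<and> infsum (edge_density f) UNIV \<le> 2 * B"
  proof (rule infsum_fatou[where F = "\<lambda>k. edge_density (h k)" and N = N])
    show "(\<lambda>k. edge_density (h k) p) \<longlonglongrightarrow> edge_density f p" for p
      by (cases p) (auto simp: edge_density_def intro!: tendsto_eq_intros lim)
    show "edge_density (h k) summable_on UNIV \<and> infsum (edge_density (h k)) UNIV \<le> 2 * B"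
      if "k \<ge> N" for k
      using D[OF that] bound[OF that] killing_sum_nonneg[of "h k" UNIV]
      by (auto simp: DQN_iff energy_def)
  qed (rule edge_density_nonneg)
  have killing: "killing_density f summable_on UNIV \<and> infsum (killing_density f) UNIV \<le> B"
  proof (rule infsum_fatou[where F = "\<lambda>k. killing_density (h k)" and N = N])
    show "(\<lambda>k. killing_density (h k) x) \<longlonglongrightarrow> killing_density f x" for x
      by (auto simp: killing_density_def intro!: tendsto_eq_intros lim)
    show "killing_density (h k) summable_on UNIV \<and> infsum (killing_density (h k)) UNIV \<le> B"
      if "k \<ge> N" for k
      using D[OF that] bound[OF that] edge_sum_nonneg[of "h k" UNIV]
      by (auto simp: DQN_iff energy_def)
  qed (rule killing_density_nonneg)
  show "edge_density f summable_on UNIV" "killing_density f summable_on UNIV" "energy f \<le> 2 * B"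
    using edge killing killing_sum_nonneg[of f UNIV] unfolding energy_def by auto
qed

lemma total_energy_fatou:
  assumes lim: "\<And>x. (\<lambda>k. h k x) \<longlonglongrightarrow> f x" and D: "\<And>k. k \<ge> N \<Longrightarrow> h k \<in> DQN m b c"
    and bound: "\<And>k. k \<ge> N \<Longrightarrow> total_energy (h k) \<le> B"
  shows "f \<in> DQN m b c" "total_energy f \<le> 3 * B"
proof -
  have "energy (h k) \<le> B" if "k \<ge> N" for k
    using energy_le_total_energy[of "h k"] bound[OF that] by linarith
  note energy = energy_fatou[where h = h and f = f and N = N and B = B, OF lim D this]
  have mass: "mass_density f summable_on UNIV \<and> infsum (mass_density f) UNIV \<le> B"
  proof (rule infsum_fatou[where F = "\<lambda>k. mass_density (h k)" and N = N])
    show "(\<lambda>k. mass_density (h k) x) \<longlonglongrightarrow> mass_density f x" for x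
      by (auto simp: mass_density_def intro!: tendsto_eq_intros lim)
    show "mass_density (h k) summable_on UNIV \<and> infsum (mass_density (h k)) UNIV \<le> B"
      if "k \<ge> N" for k
      using D[OF that] order.trans[OF mass_le_total_energy bound[OF that]]
      by (auto simp: DQN_iff mass_def)
  qed (rule mass_density_nonneg)
  show "f \<in> DQN m b c" using energy mass by (simp add: DQN_iff)
  show "total_energy f \<le> 3 * B" using energy(3) mass unfolding total_energy_def mass_def by linarith
qed

abbreviation approximating :: "(nat \<Rightarrow> 'v \<Rightarrow> complex) \<Rightarrow> ('v \<Rightarrow> complex) \<Rightarrow> bool" where
  "approximating \<phi> u \<equiv> approx_seq m (form_restrict (QN m b c) finsupp) \<phi> u"

lemma approximating_unfold:
  assumes "approximating \<phi> u"
  shows "\<And>n. \<phi> n \<in> DQN m b c" "\<And>n. \<phi> n \<in> finsupp"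
    "(\<lambda>n. mass (\<lambda>x. \<phi> n x - u x)) \<longlonglongrightarrow> 0"
    "\<And>e. e > 0 \<Longrightarrow> \<exists>N. \<forall>n\<ge>N. \<forall>k\<ge>N. energy (\<lambda>x. \<phi> n x - \<phi> k x) < e"
proof -
  have seq: "\<forall>n. \<phi> n \<in> DQN m b c \<inter> finsupp"
    "(\<lambda>n. ell2_norm m (\<lambda>x. \<phi> n x - u x)) \<longlonglongrightarrow> 0"
    "\<forall>e>0. \<exists>N. \<forall>n\<ge>N. \<forall>k\<ge>N. cmod (QNval b c (\<lambda>x. \<phi> n x - \<phi> k x) (\<lambda>x. \<phi> n x - \<phi> k x)) < e"
    using assms unfolding approx_seq_def form_restrict_def QN_def fun_diff_def by auto
  show D: "\<And>n. \<phi> n \<in> DQN m b c" "\<And>n. \<phi> n \<in> finsupp" using seq(1) by auto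
  have "(\<lambda>n. (ell2_norm m (\<lambda>x. \<phi> n x - u x))\<^sup>2) \<longlonglongrightarrow> 0\<^sup>2" by (intro tendsto_power seq(2))
  thus "(\<lambda>n. mass (\<lambda>x. \<phi> n x - u x)) \<longlonglongrightarrow> 0"
    unfolding ell2_norm_eq using mass_nonneg by simp
  fix e :: real assume "e > 0"
  then obtain N where "\<forall>n\<ge>N. \<forall>k\<ge>N. cmod (QNval b c (\<lambda>x. \<phi> n x - \<phi> k x) (\<lambda>x. \<phi> n x - \<phi> k x)) < e"
    using seq(3) by blast
  thus "\<exists>N. \<forall>n\<ge>N. \<forall>k\<ge>N. energy (\<lambda>x. \<phi> n x - \<phi> k x) < e"
    using QNval_diagonal[OF DQN_diff[OF D(1) D(1)]] energy_nonneg by auto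
qed

lemma approximating_limit:
  assumes approx: "approximating \<phi> u" and u: "u \<in> ell2 m"
  shows "u \<in> DQN m b c" "(\<lambda>n. energy (\<lambda>x. \<phi> n x - u x)) \<longlonglongrightarrow> 0"
proof -
  note seq = approximating_unfold[OF approx]
  have diff_ell2: "(\<lambda>x. \<phi> n x - u x) \<in> ell2 m" for n by (rule ell2_diff[OF DQN_ell2[OF seq(1)] u])
  have pointwise: "(\<lambda>k. \<phi> n x - \<phi> k x) \<longlonglongrightarrow> \<phi> n x - u x" for n x
    using pointwise_from_mass[OF diff_ell2 seq(3), of x]
    by (intro tendsto_diff tendsto_const) (simp add: LIM_zero_iff)
  have tail: "(\<lambda>x. \<phi> n x - u x) \<in> DQN m b c \<and> energy (\<lambda>x. \<phi> n x - u x) \<le> 2 * e"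
    if N: "\<forall>n\<ge>N. \<forall>k\<ge>N. energy (\<lambda>x. \<phi> n x - \<phi> k x) < e" and n: "n \<ge> N" for N n e
  proof -
    have "energy (\<lambda>x. \<phi> n x - \<phi> k x) \<le> e" if "k \<ge> N" for k
      using N n that by (simp add: less_imp_le)
    note fatou = energy_fatou[where h = "\<lambda>k x. \<phi> n x - \<phi> k x" and f = "\<lambda>x. \<phi> n x - u x"
        and N = N and B = e, OF pointwise DQN_diff[OF seq(1) seq(1)] this]
    show ?thesis using fatou diff_ell2[of n] by (simp add: DQN_iff ell2_iff)
  qed
  obtain N1 where "\<forall>n\<ge>N1. \<forall>k\<ge>N1. energy (\<lambda>x. \<phi> n x - \<phi> k x) < 1" using seq(4)[of 1] by auto
  hence "(\<lambda>x. \<phi> N1 x - u x) \<in> DQN m b c" using tail by blast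
  from DQN_diff[OF seq(1)[of N1] this] show "u \<in> DQN m b c" by simp
  show "(\<lambda>n. energy (\<lambda>x. \<phi> n x - u x)) \<longlonglongrightarrow> 0"
  proof (rule LIMSEQ_I)
    fix r :: real assume r: "r > 0"
    obtain N where N: "\<forall>n\<ge>N. \<forall>k\<ge>N. energy (\<lambda>x. \<phi> n x - \<phi> k x) < r/3" using seq(4)[of "r/3"] r by auto
    have "norm (energy (\<lambda>x. \<phi> n x - u x) - 0) < r" if "n \<ge> N" for n
      using tail[OF N that] energy_nonneg[of "\<lambda>x. \<phi> n x - u x"] r by auto
    thus "\<exists>N. \<forall>n\<ge>N. norm (energy (\<lambda>x. \<phi> n x - u x) - 0) < r" by blast
  qed
qed


lemma approximating_energy_combination:
  assumes approx_u: "approximating \<phi> u" and u: "u \<in> ell2 m"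
    and approx_v: "approximating \<psi> v" and v: "v \<in> ell2 m"
  shows "(\<lambda>n. energy (\<lambda>x. \<phi> n x + a * \<psi> n x)) \<longlonglongrightarrow> energy (\<lambda>x. u x + a * v x)"
proof -
  note \<phi> = approximating_unfold(1)[OF approx_u] and \<psi> = approximating_unfold(1)[OF approx_v]
  note u_lim = approximating_limit[OF approx_u u] and v_lim = approximating_limit[OF approx_v v]
  have a\<psi>: "(\<lambda>x. a * \<psi> n x) \<in> DQN m b c" for n by (rule DQN_scale(1)[OF \<psi>])
  have av: "(\<lambda>x. a * v x) \<in> DQN m b c" by (rule DQN_scale(1)[OF v_lim(1)])
  show ?thesis
  proof (rule energy_continuous)
    show "(\<lambda>x. \<phi> n x + a * \<psi> n x) \<in> DQN m b c" for n by (rule DQN_add(1)[OF \<phi> a\<psi>])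
    show "(\<lambda>x. u x + a * v x) \<in> DQN m b c" by (rule DQN_add(1)[OF u_lim(1) av])
    have bound: "energy (\<lambda>x. \<phi> n x + a * \<psi> n x - (u x + a * v x))
        \<le> 2 * energy (\<lambda>x. \<phi> n x - u x) + 2 * ((cmod a)\<^sup>2 * energy (\<lambda>x. \<psi> n x - v x))" for n
    proof -
      have d1: "(\<lambda>x. \<phi> n x - u x) \<in> DQN m b c" by (rule DQN_diff[OF \<phi> u_lim(1)])
      have d2: "(\<lambda>x. \<psi> n x - v x) \<in> DQN m b c" by (rule DQN_diff[OF \<psi> v_lim(1)])
      have "(\<lambda>x. \<phi> n x + a * \<psi> n x - (u x + a * v x)) = (\<lambda>x. (\<phi> n x - u x) + a * (\<psi> n x - v x))"
        by (simp add: algebra_simps)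
      thus ?thesis using DQN_add(2)[OF d1 DQN_scale(1)[OF d2, of a]] DQN_scale(2)[OF d2, of a] by simp
    qed
    have "(\<lambda>n. 2 * energy (\<lambda>x. \<phi> n x - u x) + 2 * ((cmod a)\<^sup>2 * energy (\<lambda>x. \<psi> n x - v x))) \<longlonglongrightarrow> 0"
      using u_lim(2) v_lim(2) by (auto intro!: tendsto_eq_intros)
    thus "(\<lambda>n. energy (\<lambda>x. \<phi> n x + a * \<psi> n x - (u x + a * v x))) \<longlonglongrightarrow> 0"
      by (rule tendsto_sandwich[rotated 2, OF tendsto_const]) (use bound energy_nonneg in auto)
  qed
qed

text \<open>Along approximating sequences the form values converge to the value of the Neumann form:
  by polarization this reduces to convergence of the quadratic form.\<close>
lemma approximating_values:
  assumes approx_u: "approximating \<phi> u" and u: "u \<in> ell2 m"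
    and approx_v: "approximating \<psi> v" and v: "v \<in> ell2 m"
  shows "(\<lambda>n. QNval b c (\<phi> n) (\<psi> n)) \<longlonglongrightarrow> QNval b c u v"
proof -
  note combination = approximating_energy_combination[OF approx_u u approx_v v]
  have "(\<lambda>n. energy (\<lambda>x. \<phi> n x + \<psi> n x)) \<longlonglongrightarrow> energy (\<lambda>x. u x + v x)"
    "(\<lambda>n. energy (\<lambda>x. \<phi> n x - \<psi> n x)) \<longlonglongrightarrow> energy (\<lambda>x. u x - v x)"
    "(\<lambda>n. energy (\<lambda>x. \<phi> n x + \<i> * \<psi> n x)) \<longlonglongrightarrow> energy (\<lambda>x. u x + \<i> * v x)"
    "(\<lambda>n. energy (\<lambda>x. \<phi> n x - \<i> * \<psi> n x)) \<longlonglongrightarrow> energy (\<lambda>x. u x - \<i> * v x)"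
    using combination[of 1] combination[of "-1"] combination[of \<i>] combination[of "-\<i>"] by simp_all
  thus ?thesis
    unfolding QNval_polarization[OF approximating_unfold(1)[OF approx_u] approximating_unfold(1)[OF approx_v]]
      QNval_polarization[OF approximating_limit(1)[OF approx_u u] approximating_limit(1)[OF approx_v v]]
    by (intro tendsto_intros)
qed

lemma QD_domain: "fst (QD m b c) = {u \<in> ell2 m. \<exists>\<phi>. approximating \<phi> u}"
  unfolding QD_def form_closure_def by simp

lemma QD_subset_DQN: "u \<in> fst (QD m b c) \<Longrightarrow> u \<in> DQN m b c"
  unfolding QD_domain using approximating_limit(1) by blast

lemma QD_value:
  assumes "u \<in> fst (QD m b c)" "v \<in> fst (QD m b c)"
  shows "snd (QD m b c) u v = QNval b c u v"
proof -
  obtain \<phi> \<psi> where approx: "approximating \<phi> u" "approximating \<psi> v" and ell2: "u \<in> ell2 m" "v \<in> ell2 m"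
    using assms unfolding QD_domain by blast
  have "(THE z. \<forall>\<phi> \<psi>. approximating \<phi> u \<longrightarrow> approximating \<psi> v
      \<longrightarrow> (\<lambda>n. QNval b c (\<phi> n) (\<psi> n)) \<longlonglongrightarrow> z) = QNval b c u v"
  proof (rule the_equality)
    fix z assume "\<forall>\<phi> \<psi>. approximating \<phi> u \<longrightarrow> approximating \<psi> v \<longrightarrow> (\<lambda>n. QNval b c (\<phi> n) (\<psi> n)) \<longlonglongrightarrow> z"
    with approx have "(\<lambda>n. QNval b c (\<phi> n) (\<psi> n)) \<longlonglongrightarrow> z" by blast
    thus "z = QNval b c u v" using approximating_values[OF approx(1) ell2(1) approx(2) ell2(2)]
      by (rule LIMSEQ_unique)
  qed (use approximating_values ell2 in blast)
  thus ?thesis unfolding QD_def form_closure_def form_restrict_def QN_def by simp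
qed

text \<open>A function in the Neumann domain is approximable if it can be approximated by
  finitely supported functions in the form norm; these are exactly the elements of the
  Dirichlet domain.\<close>
definition approximable :: "('v \<Rightarrow> complex) \<Rightarrow> bool" where
  "approximable w \<longleftrightarrow> w \<in> DQN m b c \<and> (\<forall>e>0. \<exists>\<phi>\<in>finsupp. total_energy (\<lambda>x. w x - \<phi> x) < e)"

lemma approximating_of_close:
  assumes w: "w \<in> DQN m b c" and \<phi>: "\<And>n. \<phi> n \<in> finsupp"
    and close: "\<And>n. total_energy (\<lambda>x. w x - \<phi> n x) < 1 / (real n + 1)"
  shows "approximating \<phi> w"
proof -
  have \<phi>_D: "\<phi> n \<in> DQN m b c" for n by (rule finsupp_DQN[OF \<phi>])
  have mass_lim: "(\<lambda>n. mass (\<lambda>x. \<phi> n x - w x)) \<longlonglongrightarrow> 0"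
  proof (rule tendsto_sandwich[OF _ _ tendsto_const tendsto_one_over_Suc])
    have "mass (\<lambda>x. \<phi> n x - w x) \<le> 1 / (real n + 1)" for n
      using close[of n] mass_le_total_energy[of "\<lambda>x. \<phi> n x - w x"]
        total_energy_swap[of w "\<phi> n"] by linarith
    thus "\<forall>\<^sub>F n in sequentially. mass (\<lambda>x. \<phi> n x - w x) \<le> 1 / (real n + 1)" by simp
  qed (use mass_nonneg in auto)
  show ?thesis
    unfolding approx_seq_def
  proof (intro conjI allI impI)
    show "\<phi> n \<in> fst (form_restrict (QN m b c) finsupp)" for n
      using \<phi>_D \<phi> unfolding form_restrict_def QN_def by simp
    have "(\<lambda>n. sqrt (mass (\<lambda>x. \<phi> n x - w x))) \<longlonglongrightarrow> sqrt 0" by (intro tendsto_real_sqrt mass_lim)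
    thus "(\<lambda>n. ell2_norm m (\<phi> n - w)) \<longlonglongrightarrow> 0" unfolding fun_diff_def ell2_norm_eq by simp
  next
    fix e :: real assume e: "e > 0"
    obtain N where N: "\<forall>n\<ge>N. 2 / (real n + 1) < e / 2" using eventually_fraction_small[of "e/2" 2] e by auto
    have "cmod (snd (form_restrict (QN m b c) finsupp) (\<phi> n - \<phi> k) (\<phi> n - \<phi> k)) < e"
      if "n \<ge> N" "k \<ge> N" for n k
    proof -
      have "(\<lambda>x. \<phi> n x - \<phi> k x) = (\<lambda>x. (w x - \<phi> k x) - (w x - \<phi> n x))" by simp
      hence "energy (\<lambda>x. \<phi> n x - \<phi> k x)
          \<le> 2 * total_energy (\<lambda>x. w x - \<phi> k x) + 2 * total_energy (\<lambda>x. w x - \<phi> n x)"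
        using DQN_add(3)[OF DQN_diff[OF w \<phi>_D[of k]] DQN_diff[OF \<phi>_D[of n] w]]
          energy_le_total_energy[of "\<lambda>x. \<phi> n x - \<phi> k x"] total_energy_swap[of w "\<phi> n"]
        by simp
      also have "\<dots> < 2 / (real k + 1) + 2 / (real n + 1)" using close[of n] close[of k] by simp
      also have "\<dots> < e" using N[rule_format, OF that(1)] N[rule_format, OF that(2)] by linarith
      finally show ?thesis
        unfolding form_restrict_def QN_def fun_diff_def
        using QNval_diagonal[OF DQN_diff[OF \<phi>_D \<phi>_D]] energy_nonneg by simp
    qed
    thus "\<exists>N. \<forall>n\<ge>N. \<forall>k\<ge>N. cmod (snd (form_restrict (QN m b c) finsupp) (\<phi> n - \<phi> k) (\<phi> n - \<phi> k)) < e"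
      by blast
  qed
qed

lemma approximable_in_QD:
  assumes "approximable w"
  shows "w \<in> fst (QD m b c)"
proof -
  have w: "w \<in> DQN m b c" using assms approximable_def by blast
  have "\<forall>n. \<exists>\<phi>. \<phi> \<in> finsupp \<and> total_energy (\<lambda>x. w x - \<phi> x) < 1 / (real n + 1)"
  proof
    fix n :: nat
    have "1 / (real n + 1) > 0" by simp
    thus "\<exists>\<phi>. \<phi> \<in> finsupp \<and> total_energy (\<lambda>x. w x - \<phi> x) < 1 / (real n + 1)"
      using assms unfolding approximable_def by blast
  qed
  then obtain \<phi> where "\<And>n. \<phi> n \<in> finsupp" "\<And>n. total_energy (\<lambda>x. w x - \<phi> n x) < 1 / (real n + 1)"
    by metis
  thus ?thesis unfolding QD_domain using approximating_of_close[OF w] w DQN_ell2 by blast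
qed

lemma exists_not_approximable:
  assumes "\<not> form_eq (QN m b c) (QD m b c)"
  shows "\<exists>w. w \<in> DQN m b c \<and> \<not> approximable w"
proof (rule ccontr)
  assume "\<not> ?thesis"
  hence "fst (QD m b c) = DQN m b c" using QD_subset_DQN approximable_in_QD by blast
  hence "form_eq (QN m b c) (QD m b c)" unfolding form_eq_def by (simp add: QN_def QD_value)
  with assms show False by blast
qed


lemma approximable_DQN: "approximable w \<Longrightarrow> w \<in> DQN m b c"
  unfolding approximable_def by blast

lemma approximable_add:
  assumes f: "approximable f" and g: "approximable g"
  shows "approximable (\<lambda>x. f x + g x)"
  unfolding approximable_def
proof (intro conjI allI impI)
  note fD = approximable_DQN[OF f] and gD = approximable_DQN[OF g]
  show "(\<lambda>x. f x + g x) \<in> DQN m b c" by (rule DQN_add(1)[OF fD gD])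
  fix e :: real assume e: "e > 0"
  obtain \<phi> where \<phi>: "\<phi> \<in> finsupp" "total_energy (\<lambda>x. f x - \<phi> x) < e/4"
    using f e unfolding approximable_def by (meson divide_pos_pos zero_less_numeral)
  obtain \<psi> where \<psi>: "\<psi> \<in> finsupp" "total_energy (\<lambda>x. g x - \<psi> x) < e/4"
    using g e unfolding approximable_def by (meson divide_pos_pos zero_less_numeral)
  have "(\<lambda>x. f x + g x - (\<phi> x + \<psi> x)) = (\<lambda>x. (f x - \<phi> x) + (g x - \<psi> x))"
    by (simp add: algebra_simps)
  hence "total_energy (\<lambda>x. f x + g x - (\<phi> x + \<psi> x)) < e"
    using DQN_add(3)[OF DQN_diff[OF fD finsupp_DQN[OF \<phi>(1)]] DQN_diff[OF gD finsupp_DQN[OF \<psi>(1)]]] \<phi> \<psi>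
    by simp
  thus "\<exists>\<phi>\<in>finsupp. total_energy (\<lambda>x. f x + g x - \<phi> x) < e"
    using finsupp_add[OF \<phi>(1) \<psi>(1)] by (intro bexI[where x = "\<lambda>x. \<phi> x + \<psi> x"]) auto
qed

lemma approximable_scale:
  assumes f: "approximable f"
  shows "approximable (\<lambda>x. s * f x)"
  unfolding approximable_def
proof (intro conjI allI impI)
  note fD = approximable_DQN[OF f]
  show "(\<lambda>x. s * f x) \<in> DQN m b c" by (rule DQN_scale(1)[OF fD])
  fix e :: real assume e: "e > 0"
  have pos: "(cmod s)\<^sup>2 + 1 > 0" by (simp add: add_nonneg_pos)
  have e': "e / ((cmod s)\<^sup>2 + 1) > 0" using e pos by simp
  obtain \<phi> where \<phi>: "\<phi> \<in> finsupp" "total_energy (\<lambda>x. f x - \<phi> x) < e / ((cmod s)\<^sup>2 + 1)"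
    using f e' unfolding approximable_def by blast
  have "(\<lambda>x. s * f x - s * \<phi> x) = (\<lambda>x. s * (f x - \<phi> x))" by (simp add: algebra_simps)
  hence "total_energy (\<lambda>x. s * f x - s * \<phi> x) = (cmod s)\<^sup>2 * total_energy (\<lambda>x. f x - \<phi> x)"
    using DQN_scale(3)[OF DQN_diff[OF fD finsupp_DQN[OF \<phi>(1)]]] by simp
  also have "\<dots> \<le> ((cmod s)\<^sup>2 + 1) * total_energy (\<lambda>x. f x - \<phi> x)"
    using total_energy_nonneg by (intro mult_right_mono) auto
  also have "\<dots> < ((cmod s)\<^sup>2 + 1) * (e / ((cmod s)\<^sup>2 + 1))"
    by (rule mult_strict_left_mono[OF \<phi>(2) pos])
  also have "\<dots> = e" using pos by simp
  finally show "\<exists>\<phi>\<in>finsupp. total_energy (\<lambda>x. s * f x - \<phi> x) < e"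
    using finsupp_scale[OF \<phi>(1)] by (intro bexI[where x = "\<lambda>x. s * \<phi> x"]) auto
qed

lemma approximable_closed:
  assumes w: "w \<in> DQN m b c"
    and close: "\<And>e. e > 0 \<Longrightarrow> \<exists>v. approximable v \<and> total_energy (\<lambda>x. w x - v x) < e"
  shows "approximable w"
  unfolding approximable_def
proof (intro conjI allI impI w)
  fix e :: real assume e: "e > 0"
  obtain v where v: "approximable v" "total_energy (\<lambda>x. w x - v x) < e/4" using close[of "e/4"] e by auto
  note vD = approximable_DQN[OF v(1)]
  obtain \<phi> where \<phi>: "\<phi> \<in> finsupp" "total_energy (\<lambda>x. v x - \<phi> x) < e/4"
    using v e unfolding approximable_def by (meson divide_pos_pos zero_less_numeral)
  have "(\<lambda>x. w x - \<phi> x) = (\<lambda>x. (w x - v x) + (v x - \<phi> x))" by simp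
  hence "total_energy (\<lambda>x. w x - \<phi> x) < e"
    using DQN_add(3)[OF DQN_diff[OF w vD] DQN_diff[OF vD finsupp_DQN[OF \<phi>(1)]]] v \<phi> by simp
  thus "\<exists>\<phi>\<in>finsupp. total_energy (\<lambda>x. w x - \<phi> x) < e" using \<phi>(1) by blast
qed

lemma total_energy_dominated_convergence:
  assumes w: "w \<in> DQN m b c"
    and increments: "\<And>k x y. cmod (h k x - h k y) \<le> cmod (w x - w y)"
    and point_values: "\<And>k x. cmod (h k x) \<le> cmod (w x)"
    and vanish: "\<And>x. \<forall>\<^sub>F k in sequentially. h k x = 0"
  shows "(\<lambda>k. total_energy (h k)) \<longlonglongrightarrow> 0"
proof -
  have edge: "(\<lambda>k. infsum (edge_density (h k)) UNIV) \<longlonglongrightarrow> 0"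
  proof (rule infsum_dominated_convergence[where G = "edge_density w"])
    show "edge_density (h k) p \<le> edge_density w p" for k p
      using increments[of k "fst p" "snd p"] b_nonneg[of "fst p" "snd p"]
      by (cases p) (auto simp: edge_density_def intro!: mult_left_mono power_mono)
    show "(\<lambda>k. edge_density (h k) p) \<longlonglongrightarrow> 0" for p
      using eventually_conj[OF vanish[of "fst p"] vanish[of "snd p"]]
      by (cases p) (auto simp: edge_density_def elim!: eventually_mono intro: tendsto_eventually)
  qed (use w in \<open>auto simp: DQN_iff edge_density_nonneg\<close>)
  have killing: "(\<lambda>k. infsum (killing_density (h k)) UNIV) \<longlonglongrightarrow> 0"
  proof (rule infsum_dominated_convergence[where G = "killing_density w"])
    show "killing_density (h k) x \<le> killing_density w x" for k x
      using point_values[of k x] c_nonneg[of x]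
      by (auto simp: killing_density_def intro!: mult_left_mono power_mono)
    show "(\<lambda>k. killing_density (h k) x) \<longlonglongrightarrow> 0" for x
      using vanish[of x] by (auto simp: killing_density_def elim!: eventually_mono intro: tendsto_eventually)
  qed (use w in \<open>auto simp: DQN_iff killing_density_nonneg\<close>)
  have mass: "(\<lambda>k. mass (h k)) \<longlonglongrightarrow> 0"
    unfolding mass_def
  proof (rule infsum_dominated_convergence[where G = "mass_density w"])
    show "mass_density (h k) x \<le> mass_density w x" for k x
      using point_values[of k x] m_pos[of x]
      by (auto simp: mass_density_def intro!: mult_right_mono power_mono)
    show "(\<lambda>k. mass_density (h k) x) \<longlonglongrightarrow> 0" for x
      using vanish[of x] by (auto simp: mass_density_def elim!: eventually_mono intro: tendsto_eventually)
  qed (use w in \<open>auto simp: DQN_iff mass_density_nonneg\<close>)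
  show ?thesis unfolding total_energy_def energy_def
    using tendsto_add[OF tendsto_add[OF tendsto_divide[OF edge tendsto_const] killing] mass] by simp
qed

lemma cutoff_DQN:
  assumes w: "w \<in> DQN m b c" and K: "K \<ge> 0"
    and p_lipschitz: "\<And>a a'. \<bar>p a - p a'\<bar> \<le> cmod (a - a')" and p_bound: "\<And>a. \<bar>p a\<bar> \<le> cmod a"
  shows "(\<lambda>x. complex_of_real (cutoff K (p (w x)))) \<in> DQN m b c"
proof (rule DQN_contraction(1)[OF w])
  fix x y
  have "cmod (complex_of_real (cutoff K (p (w x))) - complex_of_real (cutoff K (p (w y))))
      = \<bar>cutoff K (p (w x)) - cutoff K (p (w y))\<bar>" by (simp flip: of_real_diff)
  also have "\<dots> \<le> cmod (w x - w y)"
    using cutoff_lipschitz[OF K] p_lipschitz order.trans by blast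
  finally show "cmod (complex_of_real (cutoff K (p (w x))) - complex_of_real (cutoff K (p (w y))))
      \<le> cmod (w x - w y)" .
  show "cmod (complex_of_real (cutoff K (p (w x)))) \<le> cmod (w x)"
    using cutoff_abs_le[OF K, of "p (w x)"] p_bound[of "w x"] by simp
qed

lemma total_energy_cutoff_tail_tendsto:
  assumes w: "w \<in> DQN m b c"
  shows "(\<lambda>k. total_energy (\<lambda>x. complex_cutoff_tail (real k) (w x))) \<longlonglongrightarrow> 0"
proof (rule total_energy_dominated_convergence[OF w])
  show "cmod (complex_cutoff_tail (real k) (w x) - complex_cutoff_tail (real k) (w y)) \<le> cmod (w x - w y)"
    for k x y by (rule complex_cutoff_tail_lipschitz) simp
  show "cmod (complex_cutoff_tail (real k) (w x)) \<le> cmod (w x)" for k x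
    using complex_cutoff_tail_lipschitz[of "real k" "w x" 0] by (simp add: complex_cutoff_tail_zero)
  show "\<forall>\<^sub>F k in sequentially. complex_cutoff_tail (real k) (w x) = 0" for x
    using eventually_ge_at_top[of "nat \<lceil>cmod (w x)\<rceil>"]
    by eventually_elim (auto intro!: complex_cutoff_tail_vanishes simp: nat_le_iff ceiling_le_iff)
qed

text \<open>If every bounded non-negative function in the domain is approximable, then so is every
  function in the domain: split it into four truncated parts and a tail whose form norm
  vanishes as the truncation level grows.\<close>
lemma approximable_from_bounded_nonneg:
  assumes w: "w \<in> DQN m b c"
    and bounded: "\<And>h K. h \<in> DQN m b c \<Longrightarrow> K \<ge> 0 \<Longrightarrow> (\<forall>x. Im (h x) = 0 \<and> 0 \<le> Re (h x) \<and> Re (h x) \<le> K)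
       \<Longrightarrow> approximable h"
  shows "approximable w"
proof (rule approximable_closed[OF w])
  define trunc where "trunc k p = (\<lambda>x. complex_of_real (cutoff (real k) (p (w x))))"
    for k :: nat and p :: "complex \<Rightarrow> real"
  have trunc_approximable: "approximable (trunc k p)" if p: "p \<in> {Re, \<lambda>a. - Re a, Im, \<lambda>a. - Im a}" for k p
  proof -
    have lipschitz: "\<bar>p a - p a'\<bar> \<le> cmod (a - a')" for a a'
      using p abs_Re_le_cmod[of "a - a'"] abs_Im_le_cmod[of "a - a'"]
      by (auto simp del: abs_Re_le_cmod abs_Im_le_cmod simp: abs_minus_commute)
    have bound: "\<bar>p a\<bar> \<le> cmod a" for a
      using p abs_Re_le_cmod[of a] abs_Im_le_cmod[of a] by (auto simp del: abs_Re_le_cmod abs_Im_le_cmod)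
    have "trunc k p \<in> DQN m b c" unfolding trunc_def by (rule cutoff_DQN[OF w _ lipschitz bound]) simp
    moreover have "\<forall>x. Im (trunc k p x) = 0 \<and> 0 \<le> Re (trunc k p x) \<and> Re (trunc k p x) \<le> real k"
      using cutoff_range[of "real k"] unfolding trunc_def by auto
    ultimately show ?thesis using bounded[of _ "real k"] by auto
  qed
  define W where "W k = (\<lambda>x. trunc k Re x + (-1) * trunc k (\<lambda>a. - Re a) x
    + (\<i> * trunc k Im x + (-\<i>) * trunc k (\<lambda>a. - Im a) x))" for k
  have W_approximable: "approximable (W k)" for k
  proof -
    have "approximable (trunc k Re)" "approximable (trunc k (\<lambda>a. - Re a))"
      "approximable (trunc k Im)" "approximable (trunc k (\<lambda>a. - Im a))"
      by (rule trunc_approximable; simp)+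
    from approximable_add[OF approximable_add[OF this(1) approximable_scale[OF this(2), of "-1"]]
        approximable_add[OF approximable_scale[OF this(3), of \<i>] approximable_scale[OF this(4), of "-\<i>"]]]
    show ?thesis unfolding W_def .
  qed
  have tail: "w x - W k x = complex_cutoff_tail (real k) (w x)" for k x
    using complex_cutoff_decomposition[of "w x" "real k"] unfolding W_def trunc_def
    by (simp add: algebra_simps)
  note tail_lim = total_energy_cutoff_tail_tendsto[OF w]
  show "\<exists>v. approximable v \<and> total_energy (\<lambda>x. w x - v x) < e" if e: "e > 0" for e
  proof -
    obtain k where "norm (total_energy (\<lambda>x. complex_cutoff_tail (real k) (w x)) - 0) < e"
      using LIMSEQ_D[OF tail_lim e] by blast
    hence "total_energy (\<lambda>x. w x - W k x) < e" by (simp add: tail)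
    thus ?thesis using W_approximable by blast
  qed
qed

lemma exists_bounded_not_approximable:
  assumes "\<not> form_eq (QN m b c) (QD m b c)"
  shows "\<exists>w K. w \<in> DQN m b c \<and> \<not> approximable w \<and> K \<ge> 0
           \<and> (\<forall>x. Im (w x) = 0 \<and> 0 \<le> Re (w x) \<and> Re (w x) \<le> K)"
  using exists_not_approximable[OF assms] approximable_from_bounded_nonneg by blast


text \<open>For a real function \<open>F\<close>, \<open>energy_gradient F x = m x * ((L + 1) F) x\<close>; it is (half) the
  derivative of the form norm in the direction of the unit mass at \<open>x\<close>, whose own form norm is
  \<open>point_energy x\<close>.\<close>
definition energy_gradient :: "('v \<Rightarrow> real) \<Rightarrow> 'v \<Rightarrow> real" where
  "energy_gradient F x = infsum (\<lambda>y. b x y * (F x - F y)) UNIV + (c x + m x) * F x"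

definition point_energy :: "'v \<Rightarrow> real" where
  "point_energy x = infsum (b x) UNIV + c x + m x"

lemma point_energy_pos: "point_energy x > 0"
  using infsum_nonneg[of UNIV "b x"] b_nonneg c_nonneg[of x] m_pos[of x]
  unfolding point_energy_def by (smt (verit) UNIV_I)

lemma bounded_increments_summable:
  assumes "\<And>y. \<bar>F y\<bar> \<le> K"
  shows "(\<lambda>y. b x y * (F x - F y)) summable_on UNIV"
proof (rule summable_on_dominated[OF b_summable])
  fix y
  have "b x y * \<bar>F x - F y\<bar> \<le> b x y * (2 * K)"
    using assms[of x] assms[of y] by (intro mult_left_mono b_nonneg) linarith
  thus "\<bar>b x y * (F x - F y)\<bar> \<le> 2 * K * b x y" using b_nonneg[of x y] by (simp add: abs_mult mult_ac)
qed

lemma edge_density_of_real: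
  "edge_density (\<lambda>y. complex_of_real (G y)) (y, z) = b y z * (G y - G z)\<^sup>2"
  unfolding edge_density_def by (simp flip: of_real_diff)

text \<open>Perturbing a bounded real function by \<open>t\<close> times the unit mass at \<open>x\<close> changes the edge
  density only in row and column \<open>x\<close>.\<close>
lemma edge_sum_point_shift:
  assumes F: "edge_density (\<lambda>y. complex_of_real (F y)) summable_on UNIV"
    and bounded: "\<And>y. \<bar>F y\<bar> \<le> K"
  shows "(edge_density (\<lambda>y. complex_of_real (F y + t * (if y = x then 1 else 0))) has_sum
      infsum (edge_density (\<lambda>y. complex_of_real (F y))) UNIV
      + 2 * (2 * t * infsum (\<lambda>z. b x z * (F x - F z)) UNIV + t\<^sup>2 * infsum (b x) UNIV)) UNIV"
proof -
  define ph where "ph z = 2 * t * (b x z * (F x - F z)) + t\<^sup>2 * b x z" for z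
  have ph: "(ph has_sum 2 * t * infsum (\<lambda>z. b x z * (F x - F z)) UNIV + t\<^sup>2 * infsum (b x) UNIV) UNIV"
    unfolding ph_def using bounded_increments_summable[OF bounded] b_summable
    by (intro has_sum_add has_sum_cmult_right has_sum_infsum)
  define row where "row = (\<lambda>(y,z). if y = x then ph z else 0)"
  define column where "column = (\<lambda>(y,z). if z = x then ph y else 0)"
  have shift: "edge_density (\<lambda>y. complex_of_real (F y + t * (if y = x then 1 else 0)))
      = (\<lambda>p. edge_density (\<lambda>y. complex_of_real (F y)) p + (row p + column p))"
  proof
    fix p :: "'v \<times> 'v"
    obtain y z where p: "p = (y, z)" by (cases p)
    show "edge_density (\<lambda>y. complex_of_real (F y + t * (if y = x then 1 else 0))) p
        = edge_density (\<lambda>y. complex_of_real (F y)) p + (row p + column p)"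
      using b_diag[of x] b_sym[of y x] unfolding p edge_density_of_real row_def column_def
      by (cases "y = x"; cases "z = x") (simp_all add: ph_def power2_eq_square algebra_simps)
  qed
  let ?S = "2 * t * infsum (\<lambda>z. b x z * (F x - F z)) UNIV + t\<^sup>2 * infsum (b x) UNIV"
  have "(edge_density (\<lambda>y. complex_of_real (F y + t * (if y = x then 1 else 0))) has_sum
      infsum (edge_density (\<lambda>y. complex_of_real (F y))) UNIV + (?S + ?S)) UNIV"
    unfolding shift row_def column_def
    by (intro has_sum_add has_sum_infsum F has_sum_row has_sum_column ph)
  thus ?thesis by (simp only: mult_2[of ?S])
qed

lemma total_energy_point_shift:
  assumes F: "(\<lambda>y. complex_of_real (F y)) \<in> DQN m b c" and bounded: "\<And>y. \<bar>F y\<bar> \<le> K"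
  shows "total_energy (\<lambda>y. complex_of_real (F y + t * (if y = x then 1 else 0)))
       = total_energy (\<lambda>y. complex_of_real (F y)) + 2 * t * energy_gradient F x + t\<^sup>2 * point_energy x"
proof -
  define f where "f = (\<lambda>y. complex_of_real (F y))"
  define g where "g = (\<lambda>y. complex_of_real (F y + t * (if y = x then 1 else 0)))"
  have f_summable: "edge_density f summable_on UNIV" "killing_density f summable_on UNIV"
    "mass_density f summable_on UNIV"
    using F unfolding f_def by (auto simp: DQN_iff)
  note edge = edge_sum_point_shift[OF f_summable(1)[unfolded f_def] bounded, of t x]
  have "(killing_density g has_sum infsum (killing_density f) UNIV + (2 * t * F x + t\<^sup>2) * c x) UNIV"
  proof -
    have "killing_density g y = c y * (F y + t * (if y = x then 1 else 0))\<^sup>2"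
      "killing_density f y = c y * (F y)\<^sup>2" for y
      unfolding killing_density_def g_def f_def norm_of_real power2_abs by simp_all
    hence "killing_density g = (\<lambda>y. killing_density f y + (if y = x then (2 * t * F x + t\<^sup>2) * c x else 0))"
      by (auto simp: power2_eq_square algebra_simps)
    thus ?thesis by (simp add: has_sum_add f_summable(2) has_sum_point_mass)
  qed
  moreover have "(mass_density g has_sum infsum (mass_density f) UNIV + (2 * t * F x + t\<^sup>2) * m x) UNIV"
  proof -
    have "mass_density g y = (F y + t * (if y = x then 1 else 0))\<^sup>2 * m y"
      "mass_density f y = (F y)\<^sup>2 * m y" for y
      unfolding mass_density_def g_def f_def norm_of_real power2_abs by simp_all
    hence "mass_density g = (\<lambda>y. mass_density f y + (if y = x then (2 * t * F x + t\<^sup>2) * m x else 0))"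
      by (auto simp: power2_eq_square algebra_simps)
    thus ?thesis by (simp add: has_sum_add f_summable(3) has_sum_point_mass)
  qed
  ultimately show ?thesis using edge
    unfolding g_def[symmetric] f_def[symmetric] total_energy_def energy_def mass_def
      energy_gradient_def point_energy_def
    by (simp add: infsumI algebra_simps power2_eq_square)
qed


lemma energy_gradient_tendsto:
  assumes range: "\<And>n y. 0 \<le> F n y \<and> F n y \<le> K" and lim: "\<And>y. (\<lambda>n. F n y) \<longlonglongrightarrow> U y"
  shows "(\<lambda>n. energy_gradient (F n) x) \<longlonglongrightarrow> energy_gradient U x"
proof -
  have "(\<lambda>n. infsum (\<lambda>y. b x y * (F n x - F n y)) UNIV) \<longlonglongrightarrow> infsum (\<lambda>y. b x y * (U x - U y)) UNIV"
  proof (rule infsum_tendsto_dominated[where H = "\<lambda>y. K * b x y"])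
    show "(\<lambda>y. K * b x y) summable_on UNIV" by (rule summable_on_cmult_right[OF b_summable])
    show "\<bar>b x y * (F n x - F n y)\<bar> \<le> K * b x y" for n y
    proof -
      have "\<bar>F n x - F n y\<bar> \<le> K" using range[of n x] range[of n y] by linarith
      hence "b x y * \<bar>F n x - F n y\<bar> \<le> b x y * K" by (rule mult_left_mono[OF _ b_nonneg])
      thus ?thesis using b_nonneg[of x y] by (simp add: abs_mult mult.commute)
    qed
    show "(\<lambda>n. b x y * (F n x - F n y)) \<longlonglongrightarrow> b x y * (U x - U y)" for y
      by (intro tendsto_intros lim)
  qed
  thus ?thesis unfolding energy_gradient_def by (intro tendsto_intros lim)
qed

lemma euler_lagrange:
  assumes F: "\<And>n. (\<lambda>y. complex_of_real (F n y)) \<in> DQN m b c"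
    and range: "\<And>n y. 0 \<le> F n y \<and> F n y \<le> K" and lim: "\<And>y. (\<lambda>n. F n y) \<longlonglongrightarrow> U y"
    and minimal: "\<And>n t. d \<le> total_energy (\<lambda>y. complex_of_real (F n y + t * (if y = x then 1 else 0)))"
    and almost_minimal: "\<And>n. total_energy (\<lambda>y. complex_of_real (F n y)) < d + 1 / (real n + 1)"
  shows "energy_gradient U x = 0"
proof -
  define A where "A = energy_gradient U x"
  define B where "B = point_energy x"
  have quadratic_nonneg: "0 \<le> 2 * t * A + t\<^sup>2 * B" for t
  proof -
    have "\<bar>F n y\<bar> \<le> K" for n y using range[of n y] by simp
    hence "0 \<le> 1 / (real n + 1) + 2 * t * energy_gradient (F n) x + t\<^sup>2 * B" for n
      using minimal[of n t] almost_minimal[of n] total_energy_point_shift[OF F, of n K t x]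
      unfolding B_def by fastforce
    moreover have "(\<lambda>n. 1 / (real n + 1) + 2 * t * energy_gradient (F n) x + t\<^sup>2 * B)
        \<longlonglongrightarrow> 0 + 2 * t * A + t\<^sup>2 * B"
      unfolding A_def by (intro tendsto_intros tendsto_one_over_Suc energy_gradient_tendsto[OF range lim])
    ultimately show ?thesis by (simp add: LIMSEQ_le_const)
  qed
  have B_pos: "B > 0" unfolding B_def by (rule point_energy_pos)
  have "0 \<le> 2 * (- A / B) * A + (- A / B)\<^sup>2 * B" by (rule quadratic_nonneg)
  also have "\<dots> = - (A\<^sup>2 / B)" using B_pos by (simp add: power2_eq_square field_simps)
  finally have "A\<^sup>2 \<le> 0" using B_pos by (simp add: divide_le_0_iff)
  thus ?thesis unfolding A_def by simp
qed


definition distance_to_finsupp :: "('v \<Rightarrow> complex) \<Rightarrow> real" where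
  "distance_to_finsupp w = Inf {total_energy (\<lambda>x. w x - \<phi> x) | \<phi>. \<phi> \<in> finsupp}"

lemma distance_to_finsupp_le:
  assumes "\<phi> \<in> finsupp"
  shows "distance_to_finsupp w \<le> total_energy (\<lambda>x. w x - \<phi> x)"
  unfolding distance_to_finsupp_def
  by (rule cInf_lower) (use assms total_energy_nonneg in \<open>auto intro!: bdd_belowI[where m = 0]\<close>)

lemma distance_to_finsupp_approx:
  assumes "e > 0"
  shows "\<exists>\<phi>\<in>finsupp. total_energy (\<lambda>x. w x - \<phi> x) < distance_to_finsupp w + e"
proof -
  have "(\<lambda>_. 0) \<in> finsupp" unfolding finsupp_def by simp
  hence "{total_energy (\<lambda>x. w x - \<phi> x) | \<phi>. \<phi> \<in> finsupp} \<noteq> {}" by blast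
  from cInf_lessD[OF this, of "distance_to_finsupp w + e"] assms
  show ?thesis unfolding distance_to_finsupp_def by auto
qed

lemma distance_to_finsupp_le_point_shift:
  assumes "(\<lambda>y. w y - complex_of_real (F y)) \<in> finsupp"
  shows "distance_to_finsupp w \<le> total_energy (\<lambda>y. complex_of_real (F y + t * (if y = x then 1 else 0)))"
proof -
  have "(\<lambda>y. (w y - complex_of_real (F y)) + complex_of_real (- t) * (if y = x then 1 else 0)) \<in> finsupp"
    by (intro finsupp_add assms finsupp_scale finsupp_point_mass)
  hence "distance_to_finsupp w \<le> total_energy (\<lambda>y. w y - ((w y - complex_of_real (F y))
      + complex_of_real (- t) * (if y = x then 1 else 0)))"
    by (rule distance_to_finsupp_le)
  moreover have "(\<lambda>y. w y - ((w y - complex_of_real (F y)) + complex_of_real (- t) * (if y = x then 1 else 0)))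
      = (\<lambda>y. complex_of_real (F y + t * (if y = x then 1 else 0)))"
    by (rule ext) simp
  ultimately show ?thesis by simp
qed

text \<open>A minimizing sequence for the distance of a bounded non-negative \<open>w\<close> to the finitely
  supported functions; truncating to \<open>[0, K]\<close> keeps it bounded and non-negative without
  increasing the form norm.\<close>
lemma minimizing_sequence:
  assumes w: "w \<in> DQN m b c" and K: "K \<ge> 0"
    and w_range: "\<And>x. Im (w x) = 0 \<and> 0 \<le> Re (w x) \<and> Re (w x) \<le> K"
  obtains F where "\<And>n. (\<lambda>x. complex_of_real (F n x)) \<in> DQN m b c"
    "\<And>n x. 0 \<le> F n x \<and> F n x \<le> K"
    "\<And>n. (\<lambda>x. w x - complex_of_real (F n x)) \<in> finsupp"
    "\<And>n. total_energy (\<lambda>x. complex_of_real (F n x)) < distance_to_finsupp w + 1 / (real n + 1)"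
proof -
  have "\<forall>n. \<exists>\<psi>\<in>finsupp. total_energy (\<lambda>x. w x - \<psi> x) < distance_to_finsupp w + 1 / (real n + 1)"
    using distance_to_finsupp_approx by simp
  then obtain \<psi> where \<psi>: "\<And>n. \<psi> n \<in> finsupp"
    and close: "\<And>n. total_energy (\<lambda>x. w x - \<psi> n x) < distance_to_finsupp w + 1 / (real n + 1)"
    by metis
  define F where "F n x = cutoff K (Re (w x - \<psi> n x))" for n x
  have diff: "(\<lambda>x. w x - \<psi> n x) \<in> DQN m b c" for n by (rule DQN_diff[OF w finsupp_DQN[OF \<psi>]])
  have contraction: "cmod (complex_of_real (cutoff K (Re a)) - complex_of_real (cutoff K (Re a'))) \<le> cmod (a - a')"
    "cmod (complex_of_real (cutoff K (Re a))) \<le> cmod a" for a a'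
    using order.trans[OF cutoff_lipschitz[OF K] abs_Re_le_cmod[of "a - a'", simplified]]
      order.trans[OF cutoff_abs_le[OF K] abs_Re_le_cmod[of a]]
    by (simp_all flip: of_real_diff)
  have F: "(\<lambda>x. complex_of_real (F n x)) \<in> DQN m b c"
    and F_le: "total_energy (\<lambda>x. complex_of_real (F n x)) \<le> total_energy (\<lambda>x. w x - \<psi> n x)" for n
  proof -
    have "cmod (complex_of_real (F n x) - complex_of_real (F n y)) \<le> cmod ((w x - \<psi> n x) - (w y - \<psi> n y))"
      "cmod (complex_of_real (F n x)) \<le> cmod (w x - \<psi> n x)" for x y
      unfolding F_def by (rule contraction)+
    from DQN_contraction[OF diff[of n] this]
    show "(\<lambda>x. complex_of_real (F n x)) \<in> DQN m b c"
      "total_energy (\<lambda>x. complex_of_real (F n x)) \<le> total_energy (\<lambda>x. w x - \<psi> n x)" .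
  qed
  moreover have "0 \<le> F n x \<and> F n x \<le> K" for n x unfolding F_def by (rule cutoff_range[OF K])
  moreover have "(\<lambda>x. w x - complex_of_real (F n x)) \<in> finsupp" for n
  proof -
    have "w x = complex_of_real (F n x)" if "\<psi> n x = 0" for x
      using w_range[of x] that cutoff_id[of "Re (w x)" K] unfolding F_def by (simp add: complex_eq_iff)
    hence "{x. w x - complex_of_real (F n x) \<noteq> 0} \<subseteq> {x. \<psi> n x \<noteq> 0}" by auto
    thus ?thesis using \<psi>[of n] unfolding finsupp_def by (auto intro: finite_subset)
  qed
  moreover have "total_energy (\<lambda>x. complex_of_real (F n x)) < distance_to_finsupp w + 1 / (real n + 1)" for n
    using F_le[of n] close[of n] by linarith
  ultimately show ?thesis using that by blast
qed

text \<open>By the parallelogram law, minimizing sequences are Cauchy in the form norm: the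
  midpoint of two of them is again a competitor.\<close>
lemma minimizing_sequence_cauchy:
  assumes F: "\<And>n. F n \<in> DQN m b c" and competitors: "\<And>n. (\<lambda>x. w x - F n x) \<in> finsupp"
    and almost_minimal: "\<And>n. total_energy (F n) < distance_to_finsupp w + 1 / (real n + 1)"
  shows "total_energy (\<lambda>x. F n x - F k x) \<le> 2 / (real n + 1) + 2 / (real k + 1)"
proof -
  have sum: "(\<lambda>x. F n x + F k x) \<in> DQN m b c" by (rule DQN_add(1)[OF F F])
  have "(\<lambda>x. (1/2) * ((w x - F n x) + (w x - F k x))) \<in> finsupp"
    by (rule finsupp_scale[OF finsupp_add[OF competitors[of n] competitors[of k]]])
  hence "distance_to_finsupp w \<le> total_energy (\<lambda>x. w x - (1/2) * ((w x - F n x) + (w x - F k x)))"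
    by (rule distance_to_finsupp_le)
  also have "(\<lambda>x. w x - (1/2) * ((w x - F n x) + (w x - F k x))) = (\<lambda>x. (1/2) * (F n x + F k x))"
    by (simp add: algebra_simps)
  also have "total_energy (\<lambda>x. (1/2) * (F n x + F k x)) = (1/4) * total_energy (\<lambda>x. F n x + F k x)"
    using DQN_scale(3)[OF sum, of "1/2"] by (simp add: power2_eq_square)
  finally have "4 * distance_to_finsupp w \<le> total_energy (\<lambda>x. F n x + F k x)" by simp
  thus ?thesis using total_energy_parallelogram[OF F[of n] F[of k]] almost_minimal[of n] almost_minimal[of k]
    by linarith
qed

text \<open>Cauchy sequences in the form norm converge pointwise, as point evaluations are controlled
  by the mass.\<close>
lemma form_norm_cauchy_pointwise_limit:
  assumes F: "\<And>n. (\<lambda>x. complex_of_real (F n x)) \<in> DQN m b c"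
    and cauchy: "\<And>n k. total_energy (\<lambda>x. complex_of_real (F n x) - complex_of_real (F k x))
                        \<le> 2 / (real n + 1) + 2 / (real k + 1)"
  shows "convergent (\<lambda>n. F n x)"
proof (rule Cauchy_convergent, rule CauchyI)
  fix e :: real assume e: "e > 0"
  obtain N where N: "\<forall>n\<ge>N. (2 / m x) / (real n + 1) < e\<^sup>2 / 2"
    using eventually_fraction_small[of "e\<^sup>2/2" "2 / m x"] e by auto
  have "norm (F n x - F k x) < e" if "n \<ge> N" "k \<ge> N" for n k
  proof -
    have "(F n x - F k x)\<^sup>2 * m x
        \<le> total_energy (\<lambda>y. complex_of_real (F n y) - complex_of_real (F k y))"
      using mass_density_le_mass[OF DQN_ell2[OF DQN_diff[OF F[of n] F[of k]]], of x]
        mass_le_total_energy[of "\<lambda>y. complex_of_real (F n y) - complex_of_real (F k y)"]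
      by (simp flip: of_real_diff)
    also have "\<dots> \<le> 2 / (real n + 1) + 2 / (real k + 1)" by (rule cauchy)
    finally have "(F n x - F k x)\<^sup>2 \<le> (2 / (real n + 1) + 2 / (real k + 1)) / m x"
      using m_pos[of x] by (simp add: pos_le_divide_eq)
    also have "\<dots> = (2 / m x) / (real n + 1) + (2 / m x) / (real k + 1)"
      by (simp add: add_divide_distrib mult.commute)
    also have "\<dots> < e\<^sup>2" using N[rule_format, OF that(1)] N[rule_format, OF that(2)] by linarith
    finally show ?thesis using power_less_imp_less_base[of "\<bar>F n x - F k x\<bar>" 2 e] e by simp
  qed
  thus "\<exists>N. \<forall>n\<ge>N. \<forall>k\<ge>N. norm (F n x - F k x) < e" by blast
qed


lemma approximable_of_vanishing_minimizer:
  assumes w: "w \<in> DQN m b c" and F: "\<And>n. F n \<in> DQN m b c"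
    and competitor: "\<And>n. (\<lambda>x. w x - F n x) \<in> finsupp"
    and cauchy: "\<And>n k. total_energy (\<lambda>x. F n x - F k x) \<le> 2 / (real n + 1) + 2 / (real k + 1)"
    and vanishing: "\<And>x. (\<lambda>n. F n x) \<longlonglongrightarrow> 0"
  shows "approximable w"
proof -
  have small: "total_energy (F n) \<le> 12 / (real n + 1)" for n
  proof -
    have lim_diff: "(\<lambda>k. F n x - F k x) \<longlonglongrightarrow> F n x" for x
      using tendsto_diff[OF tendsto_const vanishing[of x], of "F n x"] by simp
    have bound: "total_energy (\<lambda>x. F n x - F k x) \<le> 4 / (real n + 1)" if "k \<ge> n" for k
    proof -
      have "2 / (real k + 1) \<le> 2 / (real n + 1)" using that by (simp add: frac_le)
      thus ?thesis using cauchy[of n k] by linarith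
    qed
    have "total_energy (F n) \<le> 3 * (4 / (real n + 1))"
      by (rule total_energy_fatou(2)[OF lim_diff DQN_diff[OF F F] bound])
    thus ?thesis by simp
  qed
  show ?thesis
    unfolding approximable_def
  proof (intro conjI allI impI w)
    fix e :: real assume e: "e > 0"
    obtain N where "\<forall>n\<ge>N. 12 / (real n + 1) < e" using eventually_fraction_small[OF e] by blast
    hence "12 / (real N + 1) < e" by simp
    hence "total_energy (\<lambda>x. w x - (w x - F N x)) < e" using small[of N] by simp
    thus "\<exists>\<phi>\<in>finsupp. total_energy (\<lambda>x. w x - \<phi> x) < e"
      using competitor[of N] by (intro bexI[where x = "\<lambda>x. w x - F N x"])
  qed
qed

lemma bounded_solution_from_non_approximable:
  assumes w: "w \<in> DQN m b c" and not_approximable: "\<not> approximable w" and K: "K \<ge> 0"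
    and w_range: "\<And>x. Im (w x) = 0 \<and> 0 \<le> Re (w x) \<and> Re (w x) \<le> K"
  obtains U where "(\<lambda>x. complex_of_real (U x)) \<in> DQN m b c" "\<And>x. 0 \<le> U x \<and> U x \<le> K"
    "U \<noteq> (\<lambda>_. 0)" "\<And>x. energy_gradient U x = 0"
proof -
  define d where "d = distance_to_finsupp w"
  obtain F where F: "\<And>n. (\<lambda>x. complex_of_real (F n x)) \<in> DQN m b c"
    and range: "\<And>n x. 0 \<le> F n x \<and> F n x \<le> K"
    and competitor: "\<And>n. (\<lambda>x. w x - complex_of_real (F n x)) \<in> finsupp"
    and almost_minimal: "\<And>n. total_energy (\<lambda>x. complex_of_real (F n x)) < d + 1 / (real n + 1)"
    using minimizing_sequence[OF w K w_range] unfolding d_def by blast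
  have cauchy: "total_energy (\<lambda>x. complex_of_real (F n x) - complex_of_real (F k x))
      \<le> 2 / (real n + 1) + 2 / (real k + 1)" for n k
    using minimizing_sequence_cauchy[OF F competitor almost_minimal[unfolded d_def]] .
  define U where "U x = lim (\<lambda>n. F n x)" for x
  have lim: "(\<lambda>n. F n x) \<longlonglongrightarrow> U x" for x
    unfolding U_def by (rule convergent_LIMSEQ_iff[THEN iffD1, OF form_norm_cauchy_pointwise_limit[OF F cauchy]])
  have lim_complex: "(\<lambda>n. complex_of_real (F n x)) \<longlonglongrightarrow> complex_of_real (U x)" for x
    by (rule tendsto_of_real[OF lim])
  have U_range: "0 \<le> U x \<and> U x \<le> K" for x
    using LIMSEQ_le_const[OF lim[of x]] LIMSEQ_le_const2[OF lim[of x]] range by blast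
  have "total_energy (\<lambda>x. complex_of_real (F n x)) \<le> d + 1" for n
  proof -
    have "1 / (real n + 1) \<le> 1" by simp
    thus ?thesis using almost_minimal[of n] by linarith
  qed
  hence U: "(\<lambda>x. complex_of_real (U x)) \<in> DQN m b c"
    by (rule total_energy_fatou(1)[where N = 0, OF lim_complex F])
  have nonzero: "U \<noteq> (\<lambda>_. 0)"
  proof
    assume "U = (\<lambda>_. 0)"
    hence "(\<lambda>n. complex_of_real (F n x)) \<longlonglongrightarrow> 0" for x using lim_complex[of x] by simp
    from approximable_of_vanishing_minimizer[OF w F competitor cauchy this] not_approximable
    show False by blast
  qed
  have "energy_gradient U x = 0" for x
  proof (rule euler_lagrange[OF F range lim])
    show "d \<le> total_energy (\<lambda>y. complex_of_real (F n y + t * (if y = x then 1 else 0)))" for n t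
      unfolding d_def by (rule distance_to_finsupp_le_point_shift[OF competitor])
  qed (rule almost_minimal)
  with U U_range nonzero show ?thesis using that by blast
qed

lemma Ltilde_of_real:
  assumes bounded: "\<And>y. \<bar>U y\<bar> \<le> K"
  shows "(\<lambda>y. complex_of_real (U y)) \<in> Ftilde b"
    "Ltilde m b c (\<lambda>y. complex_of_real (U y)) x + complex_of_real (U x)
       = complex_of_real (energy_gradient U x / m x)"
proof -
  show "(\<lambda>y. complex_of_real (U y)) \<in> Ftilde b"
    unfolding Ftilde_def
  proof (intro CollectI allI)
    fix x
    show "(\<lambda>y. cmod (complex_of_real (b x y) * complex_of_real (U y))) summable_on UNIV"
    proof (rule summable_on_dominated[OF b_summable])
      show "\<bar>cmod (complex_of_real (b x y) * complex_of_real (U y))\<bar> \<le> K * b x y" for y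
      proof -
        have "b x y * \<bar>U y\<bar> \<le> b x y * K" by (rule mult_left_mono[OF bounded b_nonneg])
        thus ?thesis using b_nonneg[of x y] by (simp add: norm_mult abs_mult mult.commute)
      qed
    qed
  qed
  have "(\<lambda>y. complex_of_real (b x y) * (complex_of_real (U x) - complex_of_real (U y)))
      = (\<lambda>y. complex_of_real (b x y * (U x - U y)))" by simp
  thus "Ltilde m b c (\<lambda>y. complex_of_real (U y)) x + complex_of_real (U x)
      = complex_of_real (energy_gradient U x / m x)"
    unfolding Ltilde_def energy_gradient_def
    using infsum_of_real_complex[OF bounded_increments_summable[OF bounded]] m_pos[of x]
    by (simp add: field_simps)
qed

end

theorem mainTheorem7:
  fixes m :: "'v::countable \<Rightarrow> real" and b :: "'v \<Rightarrow> 'v \<Rightarrow> real" and c :: "'v \<Rightarrow> real"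
  assumes "is_graph m b c"
    and "\<not> form_eq (QN m b c) (QD m b c)"
  shows "\<exists>u. u \<in> DQN m b c \<and> u \<in> ell_infty \<and> (\<forall>x. Im (u x) = 0 \<and> Re (u x) \<ge> 0)
             \<and> u \<noteq> (\<lambda>_. 0) \<and> u \<in> Ftilde b \<and> (\<forall>x. Ltilde m b c u x + u x = 0)"
proof -
  interpret weighted_graph m b c by (rule weighted_graph.intro[OF assms(1)])
  obtain w K where w: "w \<in> DQN m b c" "\<not> approximable w" "K \<ge> 0"
    "\<forall>x. Im (w x) = 0 \<and> 0 \<le> Re (w x) \<and> Re (w x) \<le> K"
    using exists_bounded_not_approximable[OF assms(2)] by blast
  obtain U where U: "(\<lambda>x. complex_of_real (U x)) \<in> DQN m b c" "\<And>x. 0 \<le> U x \<and> U x \<le> K"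
    "U \<noteq> (\<lambda>_. 0)" "\<And>x. energy_gradient U x = 0"
    using bounded_solution_from_non_approximable[OF w(1-3)] w(4) by blast
  have bounded: "\<bar>U x\<bar> \<le> K" for x using U(2)[of x] by simp
  define u where "u = (\<lambda>x. complex_of_real (U x))"
  show ?thesis
  proof (intro exI[of _ u] conjI allI)
    show "u \<in> DQN m b c" unfolding u_def by (rule U(1))
    show "u \<in> ell_infty" unfolding u_def ell_infty_def using bounded by auto
    show "Im (u x) = 0" "0 \<le> Re (u x)" for x unfolding u_def using U(2)[of x] by simp_all
    show "u \<noteq> (\<lambda>_. 0)" unfolding u_def using U(3) by (auto simp: fun_eq_iff)
    show "u \<in> Ftilde b" unfolding u_def by (rule Ltilde_of_real(1)[where U = U and K = K, OF bounded])
    show "Ltilde m b c u x + u x = 0" for x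
      unfolding u_def Ltilde_of_real(2)[where U = U and K = K, OF bounded] U(4) by simp
  qed
qed

end
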